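(* Let $(\mathbf A,\exists)$ be a monadic Pavelka algebra with $\mathbf A$ semisimple, and let $\forall(x)=\neg\exists(\neg x)$. The following are equivalent: (i) the relation $R\colon\mathrm{Spec_M}\mathbf A\times\mathrm{Spec_M}\mathbf A\to[0,1]$, $R(F,F')=\bigwedge_{a\in A}(\forall(a)/F'\rightarrow a/F)$, is $\{0,1\}$-valued (i.e. $(\mathbf A,\exists)$ is induced by a boolean equivalence); (ii) $(\mathbf A,\exists)$ is a monadic Pavelka algebra in the original sense, i.e. for all $x,y\in A$ and all constants $\mathbf r$: $x\le\exists x$; $\exists(x\vee y)=\exists x\vee\exists y$; $\exists(\neg\exists x)=\neg\exists x$; $\exists(\exists x\oplus\exists y)=\exists x\oplus\exists y$; $\exists(x\oplus x)=\exists x\oplus\exists x$; $\exists(x\cdot x)=\exists x\cdot\exists x$; and $\exists\mathbf r=\mathbf r$; (iii) $\forall(x)\cdot\forall(y)\le\forall(x\cdot y)$ for all $x,y\in A$.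
   Context: An MV-algebra $(A;\oplus,\neg,0)$ carries derived operations $1=\neg0$, $x\cdot y=\neg(\neg x\oplus\neg y)$, $x\rightarrow y=\neg x\oplus y$, $x\vee y=\neg(\neg x\oplus y)\oplus y$, $x\wedge y=\neg(\neg x\vee\neg y)$, order $x\le y$ iff $\neg x\oplus y=1$. The standard MV-algebra is $[0,1]$ with $x\oplus y=\min\{x+y,1\}$, $\neg x=1-x$. A Pavelka algebra is $\mathbf A=(A;\oplus,\neg,\{\mathbf r\mid r\in[0,1]\cap\mathbb Q\})$ with $(A;\oplus,\neg,\mathbf 0)$ an MV-algebra, $\mathbf r\oplus\mathbf s=\mathbf t$ whenever $\min\{r+s,1\}=t$, $\neg\mathbf r=\mathbf s$ whenever $1-r=s$. Filters are filters of the MV-reduct; $\mathrm{Spec_M}\mathbf A$ is the set of maximal proper filters; for $F\in\mathrm{Spec_M}\mathbf A$, $\mathbf A/F$ embeds uniquely into $[0,1]$ and $x/F$ is identified with its image. Semisimple: MV-reduct is a subdirect product of simple MV-algebras. A monadic Pavelka algebra is $(\mathbf A,\exists)$ with $\exists$ a closure operator (monotone, $x\le\exists x$, $\exists\exists x=\exists x$) such that $\exists(\neg\exists(x))=\neg\exists(x)$ and $\mathbf r\cdot\exists(x)=\exists(\mathbf r\cdot x)$ for all $x$ and constants $\mathbf r$. *)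

theory Defs
  imports Complex_Main
begin

definition mv_algebra :: "'a set \<Rightarrow> ('a \<Rightarrow> 'a \<Rightarrow> 'a) \<Rightarrow> ('a \<Rightarrow> 'a) \<Rightarrow> 'a \<Rightarrow> bool" where
  "mv_algebra A p n z \<longleftrightarrow>
     z \<in> A \<and> (\<forall>x\<in>A. \<forall>y\<in>A. p x y \<in> A) \<and> (\<forall>x\<in>A. n x \<in> A) \<and>
     (\<forall>x\<in>A. \<forall>y\<in>A. \<forall>w\<in>A. p (p x y) w = p x (p y w)) \<and>
     (\<forall>x\<in>A. \<forall>y\<in>A. p x y = p y x) \<and>
     (\<forall>x\<in>A. p x z = x) \<and>
     (\<forall>x\<in>A. n (n x) = x) \<and>
     (\<forall>x\<in>A. p x (n z) = n z) \<and>
     (\<forall>x\<in>A. \<forall>y\<in>A. p (n (p (n x) y)) y = p (n (p (n y) x)) x)"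

definition mv_mult :: "('a \<Rightarrow> 'a \<Rightarrow> 'a) \<Rightarrow> ('a \<Rightarrow> 'a) \<Rightarrow> 'a \<Rightarrow> 'a \<Rightarrow> 'a" where
  "mv_mult p n x y = n (p (n x) (n y))"

definition mv_sup :: "('a \<Rightarrow> 'a \<Rightarrow> 'a) \<Rightarrow> ('a \<Rightarrow> 'a) \<Rightarrow> 'a \<Rightarrow> 'a \<Rightarrow> 'a" where
  "mv_sup p n x y = p (n (p (n x) y)) y"

definition mv_le :: "('a \<Rightarrow> 'a \<Rightarrow> 'a) \<Rightarrow> ('a \<Rightarrow> 'a) \<Rightarrow> 'a \<Rightarrow> 'a \<Rightarrow> 'a \<Rightarrow> bool" where
  "mv_le p n z x y \<longleftrightarrow> p (n x) y = n z"

text \<open>Filters of an MV-algebra (1 = n z).\<close>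
definition mv_filter :: "'a set \<Rightarrow> ('a \<Rightarrow> 'a \<Rightarrow> 'a) \<Rightarrow> ('a \<Rightarrow> 'a) \<Rightarrow> 'a \<Rightarrow> 'a set \<Rightarrow> bool" where
  "mv_filter A p n z F \<longleftrightarrow>
     F \<subseteq> A \<and> n z \<in> F \<and> (\<forall>x\<in>F. \<forall>y\<in>F. mv_mult p n x y \<in> F) \<and>
     (\<forall>x\<in>F. \<forall>y\<in>A. mv_le p n z x y \<longrightarrow> y \<in> F)"

definition spec_M :: "'a set \<Rightarrow> ('a \<Rightarrow> 'a \<Rightarrow> 'a) \<Rightarrow> ('a \<Rightarrow> 'a) \<Rightarrow> 'a \<Rightarrow> 'a set set" where
  "spec_M A p n z = {F. mv_filter A p n z F \<and> F \<noteq> A \<and>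
       (\<forall>G. mv_filter A p n z G \<and> F \<subseteq> G \<and> G \<noteq> A \<longrightarrow> G = F)}"

definition mv_semisimple :: "'a set \<Rightarrow> ('a \<Rightarrow> 'a \<Rightarrow> 'a) \<Rightarrow> ('a \<Rightarrow> 'a) \<Rightarrow> 'a \<Rightarrow> bool" where
  "mv_semisimple A p n z \<longleftrightarrow> A \<inter> \<Inter>(spec_M A p n z) = {n z}"

definition mv_hom_unit :: "'a set \<Rightarrow> ('a \<Rightarrow> 'a \<Rightarrow> 'a) \<Rightarrow> ('a \<Rightarrow> 'a) \<Rightarrow> 'a \<Rightarrow> ('a \<Rightarrow> real) \<Rightarrow> bool" where
  "mv_hom_unit A p n z h \<longleftrightarrow>
     (\<forall>x\<in>A. 0 \<le> h x \<and> h x \<le> 1) \<and> h z = 0 \<and>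
     (\<forall>x\<in>A. \<forall>y\<in>A. h (p x y) = min (h x + h y) 1) \<and>
     (\<forall>x\<in>A. h (n x) = 1 - h x)"

text \<open>x/F, identified with its image under the unique embedding of A/F into [0,1]:
  the value at x of the (unique) homomorphism A \<rightarrow> [0,1] whose 1-filter is F.\<close>
definition quot_val :: "'a set \<Rightarrow> ('a \<Rightarrow> 'a \<Rightarrow> 'a) \<Rightarrow> ('a \<Rightarrow> 'a) \<Rightarrow> 'a \<Rightarrow> 'a set \<Rightarrow> 'a \<Rightarrow> real" where
  "quot_val A p n z F x =
     (THE r. \<exists>h. mv_hom_unit A p n z h \<and> {y\<in>A. h y = 1} = F \<and> h x = r)"

definition pavelka :: "'a set \<Rightarrow> ('a \<Rightarrow> 'a \<Rightarrow> 'a) \<Rightarrow> ('a \<Rightarrow> 'a) \<Rightarrow> (rat \<Rightarrow> 'a) \<Rightarrow> bool" where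
  "pavelka A p n c \<longleftrightarrow>
     mv_algebra A p n (c 0) \<and>
     (\<forall>r. 0 \<le> r \<and> r \<le> 1 \<longrightarrow> c r \<in> A) \<and>
     (\<forall>r s. 0 \<le> r \<and> r \<le> 1 \<and> 0 \<le> s \<and> s \<le> 1 \<longrightarrow> p (c r) (c s) = c (min (r + s) 1)) \<and>
     (\<forall>r. 0 \<le> r \<and> r \<le> 1 \<longrightarrow> n (c r) = c (1 - r))"

definition monadic_pavelka ::
  "'a set \<Rightarrow> ('a \<Rightarrow> 'a \<Rightarrow> 'a) \<Rightarrow> ('a \<Rightarrow> 'a) \<Rightarrow> (rat \<Rightarrow> 'a) \<Rightarrow> ('a \<Rightarrow> 'a) \<Rightarrow> bool" where
  "monadic_pavelka A p n c e \<longleftrightarrow>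
     pavelka A p n c \<and>
     (\<forall>x\<in>A. e x \<in> A) \<and>
     (\<forall>x\<in>A. \<forall>y\<in>A. mv_le p n (c 0) x y \<longrightarrow> mv_le p n (c 0) (e x) (e y)) \<and>
     (\<forall>x\<in>A. mv_le p n (c 0) x (e x)) \<and>
     (\<forall>x\<in>A. e (e x) = e x) \<and>
     (\<forall>x\<in>A. e (n (e x)) = n (e x)) \<and>
     (\<forall>r x. 0 \<le> r \<and> r \<le> 1 \<and> x \<in> A \<longrightarrow> mv_mult p n (c r) (e x) = e (mv_mult p n (c r) x))"

definition univ_q :: "('a \<Rightarrow> 'a) \<Rightarrow> ('a \<Rightarrow> 'a) \<Rightarrow> 'a \<Rightarrow> 'a" where
  "univ_q n e x = n (e (n x))"

definition rel_R ::
  "'a set \<Rightarrow> ('a \<Rightarrow> 'a \<Rightarrow> 'a) \<Rightarrow> ('a \<Rightarrow> 'a) \<Rightarrow> 'a \<Rightarrow> ('a \<Rightarrow> 'a) \<Rightarrow> 'a set \<Rightarrow> 'a set \<Rightarrow> real" where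
  "rel_R A p n z e F F' =
     (INF a\<in>A. min 1 (1 - quot_val A p n z F' (univ_q n e a) + quot_val A p n z F a))"

definition orig_monadic ::
  "'a set \<Rightarrow> ('a \<Rightarrow> 'a \<Rightarrow> 'a) \<Rightarrow> ('a \<Rightarrow> 'a) \<Rightarrow> (rat \<Rightarrow> 'a) \<Rightarrow> ('a \<Rightarrow> 'a) \<Rightarrow> bool" where
  "orig_monadic A p n c e \<longleftrightarrow>
     (\<forall>x\<in>A. mv_le p n (c 0) x (e x)) \<and>
     (\<forall>x\<in>A. \<forall>y\<in>A. e (mv_sup p n x y) = mv_sup p n (e x) (e y)) \<and>
     (\<forall>x\<in>A. e (n (e x)) = n (e x)) \<and>
     (\<forall>x\<in>A. \<forall>y\<in>A. e (p (e x) (e y)) = p (e x) (e y)) \<and>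
     (\<forall>x\<in>A. e (p x x) = p (e x) (e x)) \<and>
     (\<forall>x\<in>A. e (mv_mult p n x x) = mv_mult p n (e x) (e x)) \<and>
     (\<forall>r. 0 \<le> r \<and> r \<le> 1 \<longrightarrow> e (c r) = c r)"

end

theory Submission
  imports Defs
begin

(* Each maximal filter F yields a homomorphism x |-> x/F into [0,1] (the supremum of the rationals
   q with c q below x modulo F), and by semisimplicity these homomorphisms determine the order.
   Let B be the set of fixed points of the quantifier e.  It is closed under negation, under the
   constant operations and under the lattice operations, and R(G,F) = 1 holds exactly when G and F
   agree on B.  Condition (iii) says that B is closed under the sum.  In that case two maximal
   filters that disagree on B are separated by a truncated multiple of an element of B, so R is
   crisp.  Conversely, if R is crisp, a compactness argument (Zorn's lemma applied to a generated
   filter) shows that (e a)/F is the supremum of a/G over the G that agree with F on B.  Hence e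
   is subadditive, B is closed under the sum, and e commutes with x + x and x * x, which is (ii);
   and (ii) states directly that B is closed under the sum. *)

section \<open>MV-algebras\<close>

locale mv_alg =
  fixes A :: "'a set" and p :: "'a \<Rightarrow> 'a \<Rightarrow> 'a" and n :: "'a \<Rightarrow> 'a" and z :: 'a
  assumes mv: "mv_algebra A p n z"
begin

abbreviation oplus (infixl "\<oplus>" 65) where "x \<oplus> y \<equiv> p x y"
abbreviation otimes (infixl "\<otimes>" 70) where "x \<otimes> y \<equiv> mv_mult p n x y"
abbreviation join (infixl "\<squnion>" 65) where "x \<squnion> y \<equiv> mv_sup p n x y"
abbreviation meet (infixl "\<sqinter>" 70) where "x \<sqinter> y \<equiv> n (n x \<squnion> n y)"
abbreviation le (infix "\<preceq>" 50) where "x \<preceq> y \<equiv> mv_le p n z x y"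

lemma zero_closed[simp]: "z \<in> A"
  and oplus_closed[simp]: "x \<in> A \<Longrightarrow> y \<in> A \<Longrightarrow> x \<oplus> y \<in> A"
  and neg_closed[simp]: "x \<in> A \<Longrightarrow> n x \<in> A"
  and oplus_assoc: "x \<in> A \<Longrightarrow> y \<in> A \<Longrightarrow> w \<in> A \<Longrightarrow> x \<oplus> y \<oplus> w = x \<oplus> (y \<oplus> w)"
  and oplus_comm: "x \<in> A \<Longrightarrow> y \<in> A \<Longrightarrow> x \<oplus> y = y \<oplus> x"
  and oplus_zero[simp]: "x \<in> A \<Longrightarrow> x \<oplus> z = x"
  and neg_neg[simp]: "x \<in> A \<Longrightarrow> n (n x) = x"
  and oplus_one[simp]: "x \<in> A \<Longrightarrow> x \<oplus> n z = n z"
  and lukasiewicz: "x \<in> A \<Longrightarrow> y \<in> A \<Longrightarrow> n (n x \<oplus> y) \<oplus> y = n (n y \<oplus> x) \<oplus> x"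
  using mv unfolding mv_algebra_def by blast+

lemma zero_oplus[simp]: "x \<in> A \<Longrightarrow> z \<oplus> x = x"
  using oplus_comm[of z x] by simp

lemma one_oplus[simp]: "x \<in> A \<Longrightarrow> n z \<oplus> x = n z"
  using oplus_comm[of "n z" x] by simp

lemma oplus_left_comm: "x \<in> A \<Longrightarrow> y \<in> A \<Longrightarrow> w \<in> A \<Longrightarrow> x \<oplus> (y \<oplus> w) = y \<oplus> (x \<oplus> w)"
  by (metis oplus_assoc oplus_comm)

lemma neg_oplus_self[simp]: "x \<in> A \<Longrightarrow> n x \<oplus> x = n z"
  using lukasiewicz[of x "n z"] by simp

lemma oplus_neg_self[simp]: "x \<in> A \<Longrightarrow> x \<oplus> n x = n z"
  using neg_oplus_self[of "n x"] by simp

lemma otimes_closed[simp]: "x \<in> A \<Longrightarrow> y \<in> A \<Longrightarrow> x \<otimes> y \<in> A"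
  by (simp add: mv_mult_def)

lemma sup_closed[simp]: "x \<in> A \<Longrightarrow> y \<in> A \<Longrightarrow> x \<squnion> y \<in> A"
  by (simp add: mv_sup_def)

lemma neg_otimes[simp]: "x \<in> A \<Longrightarrow> y \<in> A \<Longrightarrow> n (x \<otimes> y) = n x \<oplus> n y"
  by (simp add: mv_mult_def)

lemma otimes_comm: "x \<in> A \<Longrightarrow> y \<in> A \<Longrightarrow> x \<otimes> y = y \<otimes> x"
  by (simp add: mv_mult_def oplus_comm)

lemma otimes_assoc: "x \<in> A \<Longrightarrow> y \<in> A \<Longrightarrow> w \<in> A \<Longrightarrow> x \<otimes> y \<otimes> w = x \<otimes> (y \<otimes> w)"
  by (simp add: mv_mult_def oplus_assoc)

lemma otimes_one[simp]: "x \<in> A \<Longrightarrow> x \<otimes> n z = x"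
  by (simp add: mv_mult_def)

lemma one_otimes[simp]: "x \<in> A \<Longrightarrow> n z \<otimes> x = x"
  by (simp add: mv_mult_def)

lemma otimes_zero[simp]: "x \<in> A \<Longrightarrow> x \<otimes> z = z"
  by (simp add: mv_mult_def)

lemma otimes_swap: "w \<in> A \<Longrightarrow> x \<in> A \<Longrightarrow> y \<in> A \<Longrightarrow> t \<in> A \<Longrightarrow>
    (w \<otimes> x) \<otimes> (y \<otimes> t) = (w \<otimes> y) \<otimes> (x \<otimes> t)"
  by (metis otimes_assoc otimes_closed otimes_comm)

lemma le_iff_oplus: "x \<in> A \<Longrightarrow> y \<in> A \<Longrightarrow> x \<preceq> y \<longleftrightarrow> (\<exists>t\<in>A. y = x \<oplus> t)"
proof
  assume x: "x \<in> A" and y: "y \<in> A" and "x \<preceq> y"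
  then have "y = n (n x \<oplus> y) \<oplus> y"
    by (simp add: mv_le_def)
  also have "\<dots> = x \<oplus> n (n y \<oplus> x)"
    using lukasiewicz[OF x y] x y oplus_comm by simp
  finally show "\<exists>t\<in>A. y = x \<oplus> t"
    using x y by auto
next
  assume "x \<in> A" "y \<in> A" "\<exists>t\<in>A. y = x \<oplus> t"
  then show "x \<preceq> y"
    by (auto simp: mv_le_def oplus_assoc[symmetric])
qed

lemma mv_le_refl[simp]: "x \<in> A \<Longrightarrow> x \<preceq> x"
  by (simp add: mv_le_def)

lemma mv_le_trans: "x \<preceq> y \<Longrightarrow> y \<preceq> w \<Longrightarrow> x \<in> A \<Longrightarrow> y \<in> A \<Longrightarrow> w \<in> A \<Longrightarrow> x \<preceq> w"
  by (auto simp: le_iff_oplus oplus_assoc)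

lemma mv_le_antisym: "x \<preceq> y \<Longrightarrow> y \<preceq> x \<Longrightarrow> x \<in> A \<Longrightarrow> y \<in> A \<Longrightarrow> x = y"
  using lukasiewicz[of x y] by (simp add: mv_le_def)

lemma le_one[simp]: "x \<in> A \<Longrightarrow> x \<preceq> n z"
  by (simp add: mv_le_def)

lemma zero_le[simp]: "x \<in> A \<Longrightarrow> z \<preceq> x"
  by (simp add: mv_le_def)

lemma one_le_iff[simp]: "x \<in> A \<Longrightarrow> n z \<preceq> x \<longleftrightarrow> x = n z"
  using mv_le_antisym le_one by fastforce

lemma le_zero_iff[simp]: "x \<in> A \<Longrightarrow> x \<preceq> z \<longleftrightarrow> x = z"
  using mv_le_antisym zero_le by fastforce

lemma le_oplus[simp]: "x \<in> A \<Longrightarrow> y \<in> A \<Longrightarrow> x \<preceq> x \<oplus> y"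
  using le_iff_oplus by auto

lemma oplus_mono: "x \<preceq> y \<Longrightarrow> x \<in> A \<Longrightarrow> y \<in> A \<Longrightarrow> w \<in> A \<Longrightarrow> x \<oplus> w \<preceq> y \<oplus> w"
  by (auto simp: le_iff_oplus) (metis oplus_assoc oplus_comm)

lemma neg_le_neg_iff[simp]: "x \<in> A \<Longrightarrow> y \<in> A \<Longrightarrow> n y \<preceq> n x \<longleftrightarrow> x \<preceq> y"
  by (simp add: mv_le_def oplus_comm)

lemma residuation: "x \<in> A \<Longrightarrow> y \<in> A \<Longrightarrow> w \<in> A \<Longrightarrow> x \<otimes> y \<preceq> w \<longleftrightarrow> x \<preceq> n y \<oplus> w"
  by (simp add: mv_le_def mv_mult_def oplus_assoc)

lemma otimes_mono: "x \<preceq> y \<Longrightarrow> x \<in> A \<Longrightarrow> y \<in> A \<Longrightarrow> w \<in> A \<Longrightarrow> x \<otimes> w \<preceq> y \<otimes> w"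
  unfolding mv_mult_def by (simp add: oplus_mono)

lemma otimes_mono2: "x \<preceq> x' \<Longrightarrow> y \<preceq> y' \<Longrightarrow> x \<in> A \<Longrightarrow> y \<in> A \<Longrightarrow> x' \<in> A \<Longrightarrow> y' \<in> A \<Longrightarrow>
    x \<otimes> y \<preceq> x' \<otimes> y'"
  by (metis mv_le_trans otimes_closed otimes_comm otimes_mono)

lemma otimes_le[simp]: "x \<in> A \<Longrightarrow> y \<in> A \<Longrightarrow> x \<otimes> y \<preceq> x"
  using le_oplus[of "n x" "n y"] neg_le_neg_iff[of "x \<otimes> y" x] by simp

lemma otimes_oplus_le: assumes "x \<in> A" "y \<in> A" "w \<in> A"
  shows "x \<otimes> (y \<oplus> w) \<preceq> (x \<otimes> y) \<oplus> w"
proof -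
  have "(y \<oplus> w) \<otimes> n w \<preceq> y"
    using assms residuation[of "y \<oplus> w" "n w" y] by (simp add: oplus_comm)
  then have "x \<otimes> ((y \<oplus> w) \<otimes> n w) \<preceq> x \<otimes> y"
    using assms otimes_mono[of "(y \<oplus> w) \<otimes> n w" y x] by (simp add: otimes_comm[of _ x])
  then have "(x \<otimes> (y \<oplus> w)) \<otimes> n w \<preceq> x \<otimes> y"
    using assms by (simp add: otimes_assoc)
  then show ?thesis
    using assms residuation[of "x \<otimes> (y \<oplus> w)" "n w" "x \<otimes> y"] by (simp add: oplus_comm)
qed

lemma imp_otimes_imp_le: assumes "a \<in> A" "b \<in> A" "d \<in> A"
  shows "(n a \<oplus> b) \<otimes> (n b \<oplus> d) \<preceq> n a \<oplus> d"
proof -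
  let ?X = "n a \<oplus> b" and ?Y = "n b \<oplus> d"
  have "?X \<otimes> a \<preceq> b" "?Y \<otimes> b \<preceq> d"
    using assms residuation by simp_all
  then have "?Y \<otimes> (?X \<otimes> a) \<preceq> d"
    using assms otimes_mono[of "?X \<otimes> a" b ?Y] mv_le_trans[of _ "?Y \<otimes> b" d]
    by (simp add: otimes_comm)
  then have "(?X \<otimes> ?Y) \<otimes> a \<preceq> d"
    using assms by (metis otimes_assoc otimes_comm oplus_closed neg_closed)
  then show ?thesis
    using assms residuation by simp
qed

lemma imp_otimes_imp_le_oplus: assumes a: "a \<in> A" and b: "b \<in> A" and d: "d \<in> A" and e: "e \<in> A"
  shows "(n a \<oplus> b) \<otimes> (n d \<oplus> e) \<preceq> n (a \<oplus> d) \<oplus> (b \<oplus> e)"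
proof -
  let ?X = "n a \<oplus> b" and ?Y = "n d \<oplus> e"
  have XA: "?X \<in> A" and YA: "?Y \<in> A"
    using assms by auto
  have "?X \<otimes> a \<preceq> b" "?Y \<otimes> d \<preceq> e"
    using assms residuation by simp_all
  then have "?X \<otimes> (a \<oplus> d) \<preceq> b \<oplus> d"
    using assms XA otimes_oplus_le[of ?X a d] oplus_mono[of "?X \<otimes> a" b d]
      mv_le_trans[of "?X \<otimes> (a \<oplus> d)" "(?X \<otimes> a) \<oplus> d"] by simp
  then have "?Y \<otimes> (?X \<otimes> (a \<oplus> d)) \<preceq> ?Y \<otimes> (d \<oplus> b)"
    using assms XA YA otimes_mono[of "?X \<otimes> (a \<oplus> d)" "b \<oplus> d" ?Y]
    by (simp add: otimes_comm[of _ ?Y] oplus_comm[of b d])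
  moreover have "?Y \<otimes> (d \<oplus> b) \<preceq> e \<oplus> b"
    using assms YA otimes_oplus_le[of ?Y d b] oplus_mono[of "?Y \<otimes> d" e b] \<open>?Y \<otimes> d \<preceq> e\<close>
      mv_le_trans[of "?Y \<otimes> (d \<oplus> b)" "(?Y \<otimes> d) \<oplus> b"] by simp
  ultimately have "?Y \<otimes> (?X \<otimes> (a \<oplus> d)) \<preceq> b \<oplus> e"
    using assms XA YA mv_le_trans[of _ "?Y \<otimes> (d \<oplus> b)" "e \<oplus> b"] by (simp add: oplus_comm[of e b])
  then have "(?X \<otimes> ?Y) \<otimes> (a \<oplus> d) \<preceq> b \<oplus> e"
    using assms XA YA by (simp add: otimes_assoc otimes_comm[of ?X ?Y])
  then show ?thesis
    using assms XA YA residuation by simp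
qed

lemma prelinearity: assumes x: "x \<in> A" and y: "y \<in> A"
  shows "(n x \<oplus> y) \<squnion> (n y \<oplus> x) = n z"
proof -
  define d where "d = n (n x \<oplus> y)"
  define u where "u = n y \<oplus> x"
  have dA: "d \<in> A" and uA: "u \<in> A"
    using x y by (auto simp: d_def u_def)
  have "n d \<oplus> n y = n z"
    using x y by (simp add: d_def oplus_assoc)
  then have d_absorb: "n (y \<oplus> d) \<oplus> d = n y"
    using lukasiewicz[of "n y" d] y dA by simp
  have "n x \<oplus> u = n z"
    using x y by (simp add: u_def oplus_left_comm[of "n x" "n y" x])
  then have "u = n (n u \<oplus> x) \<oplus> x"
    using lukasiewicz[OF x uA] uA by simp
  also have "n u \<oplus> x = d \<oplus> y"
    using lukasiewicz[OF y x] x y by (simp add: u_def d_def)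
  finally have "d \<oplus> u = (n (d \<oplus> y) \<oplus> d) \<oplus> x"
    using dA x y by (metis oplus_assoc oplus_comm oplus_closed neg_closed)
  also have "\<dots> = u"
    using d_absorb dA y by (simp add: oplus_comm u_def)
  finally have "d \<oplus> u = u" .
  then show ?thesis
    using x y by (simp add: mv_sup_def d_def u_def)
qed

lemma sup_comm: "x \<in> A \<Longrightarrow> y \<in> A \<Longrightarrow> x \<squnion> y = y \<squnion> x"
  unfolding mv_sup_def by (rule lukasiewicz)

lemma sup_ge2[simp]: "x \<in> A \<Longrightarrow> y \<in> A \<Longrightarrow> y \<preceq> x \<squnion> y"
  unfolding mv_sup_def by (metis oplus_comm le_oplus neg_closed oplus_closed)

lemma sup_ge1[simp]: "x \<in> A \<Longrightarrow> y \<in> A \<Longrightarrow> x \<preceq> x \<squnion> y"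
  using sup_ge2 sup_comm by metis

lemma sup_absorb: "y \<preceq> t \<Longrightarrow> t \<in> A \<Longrightarrow> y \<squnion> t = t"
  by (simp add: mv_sup_def mv_le_def)

lemma sup_least: assumes "x \<preceq> t" "y \<preceq> t" "x \<in> A" "y \<in> A" "t \<in> A"
  shows "x \<squnion> y \<preceq> t"
proof -
  have "n (n x \<oplus> y) \<preceq> n (n t \<oplus> y)"
    using assms oplus_mono[of "n t" "n x" y] by simp
  then have "x \<squnion> y \<preceq> t \<squnion> y"
    unfolding mv_sup_def using assms oplus_mono by simp
  also have "t \<squnion> y = t"
    using assms sup_comm[of t y] sup_absorb by simp
  finally show ?thesis .
qed

lemma inf_le1[simp]: "x \<in> A \<Longrightarrow> y \<in> A \<Longrightarrow> x \<sqinter> y \<preceq> x"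
  using sup_ge1[of "n x" "n y"] neg_le_neg_iff[of "x \<sqinter> y" x] by simp

lemma inf_le2[simp]: "x \<in> A \<Longrightarrow> y \<in> A \<Longrightarrow> x \<sqinter> y \<preceq> y"
  using sup_ge2[of "n x" "n y"] neg_le_neg_iff[of "x \<sqinter> y" y] by simp

lemma inf_greatest: "t \<preceq> x \<Longrightarrow> t \<preceq> y \<Longrightarrow> x \<in> A \<Longrightarrow> y \<in> A \<Longrightarrow> t \<in> A \<Longrightarrow> t \<preceq> x \<sqinter> y"
  using sup_least[of "n x" "n t" "n y"] neg_le_neg_iff[of t "x \<sqinter> y"] by simp

lemma sup_le_oplus: "x \<in> A \<Longrightarrow> y \<in> A \<Longrightarrow> x \<squnion> y \<preceq> x \<oplus> y"
  using otimes_le[of x "n y"] oplus_mono[of "x \<otimes> n y" x y] by (simp add: mv_sup_def mv_mult_def)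

lemma sup_otimes_le: assumes x: "x \<in> A" and y: "y \<in> A" and w: "w \<in> A"
  shows "(x \<squnion> y) \<otimes> w \<preceq> (x \<otimes> w) \<squnion> (y \<otimes> w)"
proof -
  let ?s = "(x \<otimes> w) \<squnion> (y \<otimes> w)"
  have "x \<preceq> n w \<oplus> ?s" "y \<preceq> n w \<oplus> ?s"
    using x y w residuation[of x w ?s] residuation[of y w ?s] by simp_all
  then have "x \<squnion> y \<preceq> n w \<oplus> ?s"
    using x y w sup_least by simp
  then show ?thesis
    using x y w residuation[of "x \<squnion> y" w ?s] by simp
qed

lemma sup_otimes_sup_le: assumes x: "x \<in> A" and y: "y \<in> A" and w: "w \<in> A"
  shows "(x \<squnion> y) \<otimes> (x \<squnion> w) \<preceq> x \<squnion> (y \<otimes> w)"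
proof -
  let ?r = "x \<squnion> (y \<otimes> w)"
  have "x \<otimes> (x \<squnion> w) \<preceq> ?r"
    using x y w mv_le_trans[OF otimes_le sup_ge1] by simp
  moreover have "y \<otimes> (x \<squnion> w) \<preceq> ?r"
  proof -
    have "x \<otimes> y \<preceq> ?r"
      using x y w mv_le_trans[OF otimes_le sup_ge1] by simp
    moreover have "w \<otimes> y \<preceq> ?r"
      using x y w sup_ge2[of x "y \<otimes> w"] otimes_comm[of w y] by simp
    ultimately have "(x \<squnion> w) \<otimes> y \<preceq> ?r"
      using x y w sup_otimes_le[of x w y] sup_least mv_le_trans by (meson otimes_closed sup_closed)
    then show ?thesis
      using x y w otimes_comm by simp
  qed
  ultimately show ?thesis
    using x y w sup_otimes_le[of x y "x \<squnion> w"] sup_least mv_le_trans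
    by (meson otimes_closed sup_closed)
qed

primrec otimes_pow :: "nat \<Rightarrow> 'a \<Rightarrow> 'a" where
  "otimes_pow 0 x = n z"
| "otimes_pow (Suc m) x = x \<otimes> otimes_pow m x"

lemma otimes_pow_closed[simp]: "x \<in> A \<Longrightarrow> otimes_pow m x \<in> A"
  by (induct m) auto

lemma otimes_pow_add: "x \<in> A \<Longrightarrow> otimes_pow (k + m) x = otimes_pow k x \<otimes> otimes_pow m x"
  by (induct k) (simp_all add: otimes_assoc)

lemma otimes_pow_otimes: "x \<in> A \<Longrightarrow> y \<in> A \<Longrightarrow> otimes_pow m (x \<otimes> y) = otimes_pow m x \<otimes> otimes_pow m y"
  by (induct m) (simp_all add: otimes_swap)

lemma otimes_pow_mono: "x \<preceq> y \<Longrightarrow> x \<in> A \<Longrightarrow> y \<in> A \<Longrightarrow> otimes_pow m x \<preceq> otimes_pow m y"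
  by (induct m) (auto intro: otimes_mono2)

lemma sup_eq_one_pow: assumes a: "a \<in> A" and b: "b \<in> A" and ab: "a \<squnion> b = n z"
  shows "otimes_pow m a \<squnion> b = n z"
proof (induct m)
  case 0
  then show ?case
    using b sup_comm[of "n z" b] sup_absorb[of b "n z"] by simp
next
  case (Suc m)
  let ?q = "otimes_pow m a"
  have "(b \<squnion> a) \<otimes> (b \<squnion> ?q) \<preceq> b \<squnion> (a \<otimes> ?q)"
    using a b by (simp add: sup_otimes_sup_le)
  moreover have "b \<squnion> a = n z" "b \<squnion> ?q = n z"
    using ab Suc a b sup_comm by simp_all
  ultimately show ?case
    using a b sup_comm by simp
qed

lemma pow_oplus_pow_eq_one: assumes a: "a \<in> A" and b: "b \<in> A" and ab: "a \<squnion> b = n z"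
  shows "otimes_pow m a \<oplus> otimes_pow k b = n z"
proof -
  have "b \<squnion> otimes_pow m a = n z"
    using sup_eq_one_pow[OF a b ab] sup_comm a b by simp
  then have "otimes_pow k b \<squnion> otimes_pow m a = n z"
    using sup_eq_one_pow b a by simp
  then show ?thesis
    using sup_le_oplus[of "otimes_pow k b" "otimes_pow m a"] a b oplus_comm by simp
qed

section \<open>Maximal filters\<close>

abbreviation filt where "filt F \<equiv> mv_filter A p n z F"
abbreviation SP where "SP \<equiv> spec_M A p n z"

lemma filterD:
  assumes "filt F"
  shows "F \<subseteq> A" "n z \<in> F" "x \<in> F \<Longrightarrow> y \<in> F \<Longrightarrow> x \<otimes> y \<in> F"
    "x \<in> F \<Longrightarrow> y \<in> A \<Longrightarrow> x \<preceq> y \<Longrightarrow> y \<in> F"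
  using assms unfolding mv_filter_def by blast+

lemma filter_eq_carrier: "filt F \<Longrightarrow> z \<in> F \<Longrightarrow> F = A"
  using filterD[of F] zero_le by blast

lemma otimes_pow_in_filter: "filt F \<Longrightarrow> x \<in> F \<Longrightarrow> otimes_pow m x \<in> F"
  by (induct m) (auto dest: filterD)

lemma spec_MD:
  assumes "F \<in> SP"
  shows "filt F" "z \<notin> F" "filt G \<Longrightarrow> F \<subseteq> G \<Longrightarrow> G \<noteq> A \<Longrightarrow> G = F"
  using assms filter_eq_carrier unfolding spec_M_def by blast+

lemma chain_Union_filter:
  assumes "C \<noteq> {}" and filters: "\<And>X. X \<in> C \<Longrightarrow> filt X"
    and chain: "\<And>X Y. X \<in> C \<Longrightarrow> Y \<in> C \<Longrightarrow> X \<subseteq> Y \<or> Y \<subseteq> X"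
  shows "filt (\<Union>C)"
  unfolding mv_filter_def
proof (intro conjI ballI impI)
  show "\<Union>C \<subseteq> A" "n z \<in> \<Union>C"
    using assms filterD(1,2) by blast+
next
  fix x y assume "x \<in> \<Union>C" "y \<in> \<Union>C"
  then obtain X Y where "X \<in> C" "Y \<in> C" "x \<in> X" "y \<in> Y"
    by blast
  then show "x \<otimes> y \<in> \<Union>C"
    using chain[of X Y] filters filterD(3) by blast
next
  fix x y assume "x \<in> \<Union>C" "y \<in> A" "x \<preceq> y"
  then show "y \<in> \<Union>C"
    using filters filterD(4) by blast
qed

lemma maximal_filter_exists:
  assumes "filt P" "z \<notin> P"
  shows "\<exists>G\<in>SP. P \<subseteq> G"
proof -
  define S where "S = {G. filt G \<and> z \<notin> G \<and> P \<subseteq> G}"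
  have "\<exists>U\<in>S. \<forall>X\<in>C. X \<subseteq> U" if C: "C \<in> chains S" for C
  proof (cases "C = {}")
    case True
    then show ?thesis
      using assms unfolding S_def by auto
  next
    case False
    have "\<And>X. X \<in> C \<Longrightarrow> filt X \<and> z \<notin> X \<and> P \<subseteq> X"
      and "\<And>X Y. X \<in> C \<Longrightarrow> Y \<in> C \<Longrightarrow> X \<subseteq> Y \<or> Y \<subseteq> X"
      using C unfolding chains_def chain_subset_def S_def by auto
    with False have "filt (\<Union>C)" "z \<notin> \<Union>C" "P \<subseteq> \<Union>C"
      using chain_Union_filter by blast+
    then show ?thesis
      unfolding S_def by blast
  qed
  then obtain M where M: "M \<in> S" and max: "\<forall>X\<in>S. M \<subseteq> X \<longrightarrow> X = M"
    using Zorn_Lemma2[of S] by blast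
  have "M \<in> SP"
    unfolding spec_M_def
  proof (intro CollectI conjI allI impI)
    show "filt M" "M \<noteq> A"
      using M unfolding S_def by auto
  next
    fix G assume "filt G \<and> M \<subseteq> G \<and> G \<noteq> A"
    then show "G = M"
      using M max filter_eq_carrier unfolding S_def by blast
  qed
  then show ?thesis
    using M unfolding S_def by blast
qed

lemma directed_generated_filter:
  assumes SA: "S \<subseteq> A" and "S \<noteq> {}"
    and directed: "\<And>s1 s2. s1 \<in> S \<Longrightarrow> s2 \<in> S \<Longrightarrow> \<exists>s\<in>S. s \<preceq> s1 \<and> s \<preceq> s2"
  shows "filt {y \<in> A. \<exists>s\<in>S. \<exists>m. otimes_pow m s \<preceq> y}" (is "filt ?G")
  unfolding mv_filter_def
proof (intro conjI ballI impI)
  show "?G \<subseteq> A" by blast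
  obtain s where "s \<in> S"
    using \<open>S \<noteq> {}\<close> by blast
  then have "otimes_pow 0 s \<preceq> n z"
    by simp
  with \<open>s \<in> S\<close> show "n z \<in> ?G"
    using neg_closed[OF zero_closed] by blast
next
  fix y1 y2 assume "y1 \<in> ?G" "y2 \<in> ?G"
  then obtain s1 s2 m1 m2 where s: "s1 \<in> S" "s2 \<in> S" "y1 \<in> A" "y2 \<in> A"
      and le: "otimes_pow m1 s1 \<preceq> y1" "otimes_pow m2 s2 \<preceq> y2"
    by blast
  obtain s where "s \<in> S" "s \<preceq> s1" "s \<preceq> s2"
    using directed[OF s(1,2)] by blast
  moreover have "s \<in> A" "s1 \<in> A" "s2 \<in> A"
    using \<open>s \<in> S\<close> s SA by auto
  ultimately have "otimes_pow m1 s \<preceq> y1" "otimes_pow m2 s \<preceq> y2"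
    using s le otimes_pow_mono[of s s1 m1] otimes_pow_mono[of s s2 m2]
      mv_le_trans[of "otimes_pow m1 s" "otimes_pow m1 s1" y1]
      mv_le_trans[of "otimes_pow m2 s" "otimes_pow m2 s2" y2] by simp_all
  then have "otimes_pow (m1 + m2) s \<preceq> y1 \<otimes> y2"
    using \<open>s \<in> A\<close> s otimes_mono2[of "otimes_pow m1 s" y1 "otimes_pow m2 s" y2]
    by (simp add: otimes_pow_add)
  moreover have "y1 \<otimes> y2 \<in> A"
    using s by simp
  ultimately show "y1 \<otimes> y2 \<in> ?G"
    using \<open>s \<in> S\<close> by blast
next
  fix y1 y2 assume "y1 \<in> ?G" "y2 \<in> A" "y1 \<preceq> y2"
  then obtain s m where "s \<in> S" "y1 \<in> A" "otimes_pow m s \<preceq> y1"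
    by blast
  moreover have "s \<in> A"
    using \<open>s \<in> S\<close> SA by blast
  ultimately show "y2 \<in> ?G"
    using \<open>y2 \<in> A\<close> \<open>y1 \<preceq> y2\<close> mv_le_trans[of "otimes_pow m s" y1 y2] by simp blast
qed

lemma directed_maximal_or_nilpotent:
  assumes SA: "S \<subseteq> A" and "S \<noteq> {}"
    and directed: "\<And>s1 s2. s1 \<in> S \<Longrightarrow> s2 \<in> S \<Longrightarrow> \<exists>s\<in>S. s \<preceq> s1 \<and> s \<preceq> s2"
  shows "(\<exists>G\<in>SP. S \<subseteq> G) \<or> (\<exists>s\<in>S. \<exists>m. otimes_pow m s = z)"
proof -
  let ?G = "{y \<in> A. \<exists>s\<in>S. \<exists>m. otimes_pow m s \<preceq> y}"
  have "S \<subseteq> ?G"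
  proof
    fix s assume "s \<in> S"
    moreover have "s \<in> A"
      using \<open>s \<in> S\<close> SA by blast
    moreover have "otimes_pow 1 s \<preceq> s"
      using \<open>s \<in> A\<close> by simp
    ultimately show "s \<in> ?G"
      by blast
  qed
  show ?thesis
  proof (cases "z \<in> ?G")
    case True
    then obtain s m where "s \<in> S" "otimes_pow m s \<preceq> z"
      by blast
    moreover have "s \<in> A"
      using \<open>s \<in> S\<close> SA by blast
    ultimately have "otimes_pow m s = z"
      by simp
    with \<open>s \<in> S\<close> show ?thesis
      by blast
  next
    case False
    have "filt ?G"
      using SA \<open>S \<noteq> {}\<close> directed by (rule directed_generated_filter)
    then obtain G where "G \<in> SP" "?G \<subseteq> G"
      using maximal_filter_exists False by blast
    with \<open>S \<subseteq> ?G\<close> have "\<exists>G\<in>SP. S \<subseteq> G"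
      by blast
    then show ?thesis ..
  qed
qed

lemma mono_image_directed:
  assumes T: "T \<subseteq> A" "\<And>b1 b2. b1 \<in> T \<Longrightarrow> b2 \<in> T \<Longrightarrow> b1 \<sqinter> b2 \<in> T"
    and f: "\<And>x y. x \<preceq> y \<Longrightarrow> x \<in> A \<Longrightarrow> y \<in> A \<Longrightarrow> f x \<preceq> f y"
    and s: "s1 \<in> f ` T" "s2 \<in> f ` T"
  shows "\<exists>s\<in>f ` T. s \<preceq> s1 \<and> s \<preceq> s2"
proof -
  obtain b1 b2 where b: "b1 \<in> T" "b2 \<in> T" "s1 = f b1" "s2 = f b2"
    using s by blast
  then have "b1 \<in> A" "b2 \<in> A"
    using T by auto
  then have "f (b1 \<sqinter> b2) \<preceq> s1" "f (b1 \<sqinter> b2) \<preceq> s2"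
    using b f[of "b1 \<sqinter> b2" b1] f[of "b1 \<sqinter> b2" b2] by simp_all
  moreover have "f (b1 \<sqinter> b2) \<in> f ` T"
    using b T(2) by blast
  ultimately show ?thesis
    by blast
qed

lemma maximal_filter_neg_pow:
  assumes F: "F \<in> SP" and x: "x \<in> A" "x \<notin> F"
  shows "\<exists>m. n (otimes_pow m x) \<in> F"
proof -
  note fF = spec_MD(1)[OF F]
  have FA: "F \<subseteq> A"
    using filterD(1)[OF fF] .
  let ?S = "{f \<otimes> x | f. f \<in> F}"
  have SA: "?S \<subseteq> A"
    using FA x by auto
  have "?S \<noteq> {}"
    using filterD(2)[OF fF] by blast
  moreover have "\<exists>s\<in>?S. s \<preceq> s1 \<and> s \<preceq> s2" if s: "s1 \<in> ?S" "s2 \<in> ?S" for s1 s2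
  proof -
    obtain f1 f2 where f: "f1 \<in> F" "f2 \<in> F" "s1 = f1 \<otimes> x" "s2 = f2 \<otimes> x"
      using s by blast
    then have "f1 \<otimes> f2 \<in> F" "f1 \<in> A" "f2 \<in> A"
      using filterD(3)[OF fF] FA by auto
    moreover have "f1 \<otimes> f2 \<preceq> f1" "f1 \<otimes> f2 \<preceq> f2"
      using \<open>f1 \<in> A\<close> \<open>f2 \<in> A\<close> by (simp, metis otimes_comm otimes_le)
    ultimately have "(f1 \<otimes> f2) \<otimes> x \<in> ?S" "(f1 \<otimes> f2) \<otimes> x \<preceq> s1" "(f1 \<otimes> f2) \<otimes> x \<preceq> s2"
      using f x otimes_mono[of "f1 \<otimes> f2" f1 x] otimes_mono[of "f1 \<otimes> f2" f2 x] by auto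
    then show ?thesis
      by blast
  qed
  moreover have "\<not> (\<exists>G\<in>SP. ?S \<subseteq> G)"
  proof
    assume "\<exists>G\<in>SP. ?S \<subseteq> G"
    then obtain G where G: "G \<in> SP" "?S \<subseteq> G"
      by blast
    have "F \<subseteq> G"
    proof
      fix f assume "f \<in> F"
      then show "f \<in> G"
        using G FA x filterD(4)[OF spec_MD(1)[OF G(1)], of "f \<otimes> x" f] by auto
    qed
    then have "G = F"
      using spec_MD(3)[OF F spec_MD(1)[OF G(1)]] spec_MD(2)[OF G(1)] zero_closed by blast
    moreover have "n z \<otimes> x \<in> G"
      using G(2) filterD(2)[OF fF] by blast
    ultimately show False
      using x by simp
  qed
  ultimately obtain s m where "s \<in> ?S" "otimes_pow m s = z"
    using directed_maximal_or_nilpotent[OF SA] by blast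
  then obtain f where f: "f \<in> F" "f \<in> A" and "otimes_pow m (f \<otimes> x) = z"
    using FA by blast
  then have "otimes_pow m f \<otimes> otimes_pow m x \<preceq> z"
    using x by (simp add: otimes_pow_otimes)
  then have "otimes_pow m f \<preceq> n (otimes_pow m x)"
    using f x residuation[of "otimes_pow m f" "otimes_pow m x" z] by simp
  then have "n (otimes_pow m x) \<in> F"
    using f x filterD(4)[OF fF otimes_pow_in_filter[OF fF f(1)]] by simp
  then show ?thesis ..
qed

lemma maximal_filter_linear:
  assumes F: "F \<in> SP" and x: "x \<in> A" and y: "y \<in> A"
  shows "n x \<oplus> y \<in> F \<or> n y \<oplus> x \<in> F"
proof (rule ccontr)
  assume "\<not> ?thesis"
  then obtain m k where "n (otimes_pow m (n x \<oplus> y)) \<in> F" "n (otimes_pow k (n y \<oplus> x)) \<in> F"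
    using maximal_filter_neg_pow[OF F] x y by (meson neg_closed oplus_closed)
  then have "n (otimes_pow m (n x \<oplus> y)) \<otimes> n (otimes_pow k (n y \<oplus> x)) \<in> F"
    using filterD(3)[OF spec_MD(1)[OF F]] by blast
  moreover have "otimes_pow m (n x \<oplus> y) \<oplus> otimes_pow k (n y \<oplus> x) = n z"
    using pow_oplus_pow_eq_one prelinearity x y by simp
  ultimately show False
    using spec_MD(2)[OF F] x y by (simp add: mv_mult_def)
qed

section \<open>Homomorphisms into the unit interval\<close>

abbreviation hom where "hom h \<equiv> mv_hom_unit A p n z h"

lemma
  assumes "hom h"
  shows hom_nonneg: "x \<in> A \<Longrightarrow> 0 \<le> h x"
    and hom_le_1: "x \<in> A \<Longrightarrow> h x \<le> 1"
    and hom_zero[simp]: "h z = 0"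
    and hom_oplus: "x \<in> A \<Longrightarrow> y \<in> A \<Longrightarrow> h (x \<oplus> y) = min (h x + h y) 1"
    and hom_neg: "x \<in> A \<Longrightarrow> h (n x) = 1 - h x"
  using assms unfolding mv_hom_unit_def by auto

lemma hom_one[simp]: "hom h \<Longrightarrow> h (n z) = 1"
  by (simp add: hom_neg)

lemma hom_otimes: "hom h \<Longrightarrow> x \<in> A \<Longrightarrow> y \<in> A \<Longrightarrow> h (x \<otimes> y) = max 0 (h x + h y - 1)"
  by (simp add: mv_mult_def hom_neg hom_oplus min_def max_def)

lemma hom_imp: "hom h \<Longrightarrow> x \<in> A \<Longrightarrow> y \<in> A \<Longrightarrow> h (n x \<oplus> y) = min (1 - h x + h y) 1"
  by (simp add: hom_neg hom_oplus)

lemma hom_sup: "hom h \<Longrightarrow> x \<in> A \<Longrightarrow> y \<in> A \<Longrightarrow> h (x \<squnion> y) = max (h x) (h y)"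
  using hom_nonneg[of h x] hom_nonneg[of h y] hom_le_1[of h x] hom_le_1[of h y]
  by (simp add: mv_sup_def hom_neg hom_oplus min_def max_def)

lemma hom_inf: "hom h \<Longrightarrow> x \<in> A \<Longrightarrow> y \<in> A \<Longrightarrow> h (x \<sqinter> y) = min (h x) (h y)"
  by (simp add: hom_sup hom_neg min_def max_def)

lemma hom_mono: "hom h \<Longrightarrow> x \<preceq> y \<Longrightarrow> x \<in> A \<Longrightarrow> y \<in> A \<Longrightarrow> h x \<le> h y"
  using hom_imp[of h x y] hom_nonneg[of h x] by (auto simp: mv_le_def min_def split: if_splits)

lemma hom_otimes_pow: "hom h \<Longrightarrow> x \<in> A \<Longrightarrow> h x = 1 \<Longrightarrow> h (otimes_pow m x) = 1"
  by (induct m) (simp_all add: hom_otimes)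

primrec oplus_pow :: "nat \<Rightarrow> 'a \<Rightarrow> 'a" where
  "oplus_pow 0 x = z"
| "oplus_pow (Suc m) x = x \<oplus> oplus_pow m x"

lemma oplus_pow_closed[simp]: "x \<in> A \<Longrightarrow> oplus_pow m x \<in> A"
  by (induct m) auto

lemma hom_oplus_pow: "hom h \<Longrightarrow> x \<in> A \<Longrightarrow> h (oplus_pow m x) = min 1 (of_nat m * h x)"
  using hom_nonneg[of h x] by (induct m) (auto simp: hom_oplus min_def algebra_simps)

end

locale pavelka_alg = mv_alg +
  fixes c :: "rat \<Rightarrow> 'a"
  assumes pavelka: "pavelka A p n c" and const_zero[simp]: "c 0 = z"
begin

lemma const_closed[simp]: "0 \<le> r \<Longrightarrow> r \<le> 1 \<Longrightarrow> c r \<in> A"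
  and const_oplus: "0 \<le> r \<Longrightarrow> r \<le> 1 \<Longrightarrow> 0 \<le> s \<Longrightarrow> s \<le> 1 \<Longrightarrow> c r \<oplus> c s = c (min (r + s) 1)"
  and const_neg: "0 \<le> r \<Longrightarrow> r \<le> 1 \<Longrightarrow> n (c r) = c (1 - r)"
  using pavelka unfolding pavelka_def by blast+

lemma const_one[simp]: "c 1 = n z"
  using const_neg[of 0] by simp

lemma const_otimes:
  assumes "0 \<le> r" "r \<le> 1" "0 \<le> s" "s \<le> 1"
  shows "c r \<otimes> c s = c (max 0 (r + s - 1))"
proof -
  have "c r \<otimes> c s = n (c (min (1 - r + (1 - s)) 1))"
    using assms const_oplus[of "1 - r" "1 - s"] by (simp add: mv_mult_def const_neg)
  also have "\<dots> = c (max 0 (r + s - 1))"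
    using assms by (simp add: const_neg min_def max_def)
  finally show ?thesis .
qed

lemma const_otimes_pow:
  "0 \<le> s \<Longrightarrow> s \<le> 1 \<Longrightarrow> otimes_pow m (c s) = c (max 0 (1 - of_nat m * (1 - s)))"
proof (induct m)
  case (Suc m)
  then have "otimes_pow (Suc m) (c s) = c (max 0 (s + max 0 (1 - of_nat m * (1 - s)) - 1))"
    by (simp add: const_otimes)
  also have "max 0 (s + max 0 (1 - of_nat m * (1 - s)) - 1) = max 0 (1 - of_nat (Suc m) * (1 - s))"
    using Suc by (auto simp: max_def algebra_simps)
  finally show ?case .
qed simp

lemma const_in_maximal_filter:
  assumes F: "F \<in> SP" and s: "0 \<le> s" "s \<le> 1" and cs: "c s \<in> F"
  shows "s = 1"
proof (rule ccontr)
  assume "s \<noteq> 1"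
  then obtain m :: nat where "1 / (1 - s) < of_nat m"
    using reals_Archimedean2 by blast
  then have "1 < of_nat m * (1 - s)"
    using s \<open>s \<noteq> 1\<close> by (simp add: field_simps)
  then have "otimes_pow m (c s) = z"
    using s by (simp add: const_otimes_pow)
  moreover have "otimes_pow m (c s) \<in> F"
    using otimes_pow_in_filter spec_MD(1)[OF F] cs by blast
  ultimately show False
    using spec_MD(2)[OF F] by simp
qed

text \<open>Writing \<open>t = h (c (1/m))\<close>, the relation \<open>c (1/m) = n (c ((m-1)/m))\<close> forces \<open>m * t = 1\<close>.\<close>

lemma hom_const_frac:
  assumes h: "hom h" and m: "0 < m" and k: "k \<le> m"
  shows "h (c (of_nat k / of_nat m)) = of_nat k / of_nat m"
proof -
  define t where "t = h (c (1 / of_nat m))"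
  have unit: "(0::rat) \<le> 1 / of_nat m" "(1::rat) / of_nat m \<le> 1"
    using m by (auto simp: field_simps)
  have t0: "0 \<le> t"
    using hom_nonneg[OF h] unit by (simp add: t_def)
  have multiple: "h (c (of_nat j / of_nat m)) = min (of_nat j * t) 1" if "j \<le> m" for j
    using that
  proof (induct j)
    case (Suc j)
    have j: "(0::rat) \<le> of_nat j / of_nat m" "(of_nat j :: rat) / of_nat m \<le> 1"
      "(of_nat (Suc j) :: rat) / of_nat m \<le> 1"
      using Suc m by (auto simp: field_simps)
    have "(of_nat (Suc j) :: rat) / of_nat m = of_nat j / of_nat m + 1 / of_nat m"
      by (simp add: add_divide_distrib)
    then have "c (of_nat (Suc j) / of_nat m) = c (of_nat j / of_nat m) \<oplus> c (1 / of_nat m)"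
      using j unit by (simp add: const_oplus)
    then show ?case
      using Suc j unit t0 hom_oplus[OF h] by (auto simp: t_def min_def algebra_simps)
  qed (simp add: h)
  have "(1::rat) - 1 / of_nat m = of_nat (m - 1) / of_nat m"
    using m by (simp add: field_simps of_nat_diff)
  then have "n (c (1 / of_nat m)) = c (of_nat (m - 1) / of_nat m)"
    using const_neg unit by simp
  moreover have "h (n (c (1 / of_nat m))) = 1 - t"
    using hom_neg[OF h] unit by (simp add: t_def)
  ultimately have "1 - t = min (of_nat (m - 1) * t) 1"
    using multiple[of "m - 1"] by simp
  moreover have "of_nat (m - 1) * t < 1"
  proof (rule ccontr)
    assume "\<not> of_nat (m - 1) * t < 1"
    moreover from this have "t = 0"
      using m \<open>1 - t = min (of_nat (m - 1) * t) 1\<close> by (auto simp: min_def of_nat_diff split: if_splits)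
    ultimately show False
      by simp
  qed
  ultimately have "of_nat m * t = 1"
    using m by (simp add: of_nat_diff algebra_simps)
  then have "of_nat k * t = of_nat k / of_nat m"
    using m by (simp add: field_simps)
  moreover have "of_nat k / of_nat m \<le> (1::real)"
    using k m by simp
  ultimately show ?thesis
    using multiple[OF k] by (simp add: min_def)
qed

lemma hom_const:
  assumes h: "hom h" and q: "0 \<le> q" "q \<le> 1"
  shows "h (c q) = of_rat q"
proof -
  obtain a b where ab: "quotient_of q = (a, b)"
    by (cases "quotient_of q")
  then have b: "0 < b" and qab: "q = of_int a / of_int b"
    using quotient_of_denom_pos quotient_of_div by blast+
  then have "0 \<le> a" "a \<le> b"
    using q by (simp_all add: zero_le_divide_iff divide_le_eq_1)
  then have "q = of_nat (nat a) / of_nat (nat b)"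
    using qab b by simp
  then show ?thesis
    using hom_const_frac[OF h, of "nat b" "nat a"] b \<open>a \<le> b\<close> by (simp add: of_rat_divide)
qed

lemma hom_ge_const_iff:
  assumes h: "hom h" and x: "x \<in> A" and q: "0 \<le> q" "q \<le> 1"
  shows "of_rat q \<le> h x \<longleftrightarrow> h (n (c q) \<oplus> x) = 1"
  using hom_imp[OF h _ x, of "c q"] hom_const[OF h q] q by (auto simp: min_def)

text \<open>Rational constants separate any two different values in \<open>[0,1]\<close>.\<close>

lemma hom_eq_if_same_kernel:
  assumes g: "hom g" and h: "hom h" and kernel: "\<And>y. y \<in> A \<Longrightarrow> g y = 1 \<longleftrightarrow> h y = 1"
    and x: "x \<in> A"
  shows "g x = h x"
proof (rule ccontr)
  assume "g x \<noteq> h x"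
  then have "min (g x) (h x) < max (g x) (h x)"
    by (auto simp: min_def max_def)
  then obtain q where q: "min (g x) (h x) < of_rat q" "of_rat q < max (g x) (h x)"
    using of_rat_dense by blast
  moreover have "0 \<le> min (g x) (h x)" "max (g x) (h x) \<le> 1"
    using hom_nonneg[OF g x] hom_nonneg[OF h x] hom_le_1[OF g x] hom_le_1[OF h x] by auto
  ultimately have "(0::real) < of_rat q" "(of_rat q :: real) < 1"
    by linarith+
  then have "of_rat q \<le> g x \<longleftrightarrow> of_rat q \<le> h x"
    using hom_ge_const_iff[OF g x] hom_ge_const_iff[OF h x] kernel x by simp
  with q show False
    by (auto simp: min_def max_def split: if_splits)
qed

section \<open>Values at maximal filters\<close>

text \<open>The value \<open>x/F\<close> of \<open>x\<close> at a maximal filter \<open>F\<close>: the supremum of the rationals \<open>q\<close>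
  with \<open>c q \<preceq> x\<close> modulo \<open>F\<close>.\<close>

definition lower_consts :: "'a set \<Rightarrow> 'a \<Rightarrow> rat set" where
  "lower_consts F x = {q. 0 \<le> q \<and> q \<le> 1 \<and> n (c q) \<oplus> x \<in> F}"

definition val :: "'a set \<Rightarrow> 'a \<Rightarrow> real" where
  "val F x = Sup (of_rat ` lower_consts F x)"

end

locale maximal_filter = pavelka_alg +
  fixes F
  assumes maximal: "F \<in> SP"
begin

lemma F_filter: "filt F"
  using spec_MD(1)[OF maximal] .

lemma one_in_F: "n z \<in> F"
  and F_otimes: "x \<in> F \<Longrightarrow> y \<in> F \<Longrightarrow> x \<otimes> y \<in> F"
  and F_up: "x \<in> F \<Longrightarrow> y \<in> A \<Longrightarrow> x \<preceq> y \<Longrightarrow> y \<in> F"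
  using filterD[OF F_filter] by auto

lemma lower_le_upper:
  assumes q: "q \<in> lower_consts F x" and x: "x \<in> A"
    and s: "0 \<le> s" "s \<le> 1" "n x \<oplus> c s \<in> F"
  shows "q \<le> s"
proof -
  have q01: "0 \<le> q" "q \<le> 1" "n (c q) \<oplus> x \<in> F"
    using q by (auto simp: lower_consts_def)
  then have "(n (c q) \<oplus> x) \<otimes> (n x \<oplus> c s) \<in> F"
    using F_otimes s by simp
  then have "n (c q) \<oplus> c s \<in> F"
    using F_up imp_otimes_imp_le[of "c q" x "c s"] q01 s x by simp
  then have "c (min (1 - q + s) 1) \<in> F"
    using q01 s by (simp add: const_neg const_oplus)
  then have "min (1 - q + s) 1 = 1"
    using const_in_maximal_filter[OF maximal] q01 s by simp
  then show ?thesis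
    by (simp add: min_def split: if_splits)
qed

lemma lower_or_upper: "0 \<le> q \<Longrightarrow> q \<le> 1 \<Longrightarrow> x \<in> A \<Longrightarrow> q \<in> lower_consts F x \<or> n x \<oplus> c q \<in> F"
  using maximal_filter_linear[OF maximal, of "c q" x] by (simp add: lower_consts_def)

lemma zero_in_lower: "x \<in> A \<Longrightarrow> 0 \<in> lower_consts F x"
  using one_in_F by (simp add: lower_consts_def)

lemma val_ge_lower: "q \<in> lower_consts F x \<Longrightarrow> of_rat q \<le> val F x"
  unfolding val_def
  by (rule cSup_upper) (auto simp: lower_consts_def bdd_above_def intro!: exI[of _ 1])

lemma val_le_upper:
  assumes x: "x \<in> A" and s: "0 \<le> s" "s \<le> 1" "n x \<oplus> c s \<in> F"
  shows "val F x \<le> of_rat s"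
  unfolding val_def
  by (rule cSup_least) (use zero_in_lower[OF x] lower_le_upper[OF _ x s] in \<open>auto simp: of_rat_less_eq\<close>)

lemma val_nonneg: "x \<in> A \<Longrightarrow> 0 \<le> val F x"
  using val_ge_lower[OF zero_in_lower] by simp

lemma val_le_1: "x \<in> A \<Longrightarrow> val F x \<le> 1"
  using val_le_upper[of x 1] one_in_F by simp

lemma lower_if_less_val:
  assumes x: "x \<in> A" and q: "0 \<le> q" "of_rat q < val F x"
  shows "q \<in> lower_consts F x"
proof -
  have "q \<le> 1"
    using q val_le_1[OF x] by (metis of_rat_less_eq order.trans less_le_not_le of_rat_1)
  then show ?thesis
    using lower_or_upper[OF q(1) _ x] val_le_upper[OF x q(1)] q(2) by fastforce
qed

lemma upper_if_val_less:
  assumes x: "x \<in> A" and s: "s \<le> 1" "val F x < of_rat s"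
  shows "n x \<oplus> c s \<in> F"
proof -
  have "0 \<le> s"
    using s val_nonneg[OF x] by (metis of_rat_less_eq order.trans less_le_not_le of_rat_0)
  then show ?thesis
    using lower_or_upper[OF _ s(1) x] val_ge_lower s(2) by fastforce
qed

lemma val_neg: assumes x: "x \<in> A" shows "val F (n x) = 1 - val F x"
proof (rule antisym)
  show "val F (n x) \<le> 1 - val F x"
  proof (rule ccontr)
    assume "\<not> ?thesis"
    then obtain q where q: "1 - val F x < of_rat q" "of_rat q < val F (n x)"
      using of_rat_dense by (meson not_le)
    then have q0: "0 \<le> q"
      using val_le_1[OF x] by (metis diff_ge_0_iff_ge less_le_not_le of_rat_less_eq of_rat_0 order.trans)
    then have "q \<in> lower_consts F (n x)"
      using lower_if_less_val[of "n x"] x q by simp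
    then have "n x \<oplus> c (1 - q) \<in> F" "q \<le> 1"
      using x by (auto simp: lower_consts_def const_neg oplus_comm)
    then have "val F x \<le> of_rat (1 - q)"
      using val_le_upper[OF x] q0 by simp
    then show False
      using q by (simp add: of_rat_diff)
  qed
next
  show "1 - val F x \<le> val F (n x)"
  proof (rule ccontr)
    assume "\<not> ?thesis"
    then obtain q where q: "val F (n x) < of_rat q" "of_rat q < 1 - val F x"
      using of_rat_dense by (meson not_le)
    then have "(0::real) < of_rat q" "(of_rat q :: real) < 1"
      using val_nonneg[OF x] val_nonneg[OF neg_closed[OF x]] by linarith+
    then have q01: "0 \<le> q" "q \<le> 1"
      by simp_all
    then have "n (n x) \<oplus> c q \<in> F"
      using upper_if_val_less[of "n x" q] q x by simp
    then have "1 - q \<in> lower_consts F x"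
      using q01 x by (simp add: lower_consts_def const_neg oplus_comm)
    then have "of_rat (1 - q) \<le> val F x"
      by (rule val_ge_lower)
    then show False
      using q by (simp add: of_rat_diff)
  qed
qed

lemma exists_lower_above:
  assumes x: "x \<in> A" and d: "0 < d"
  shows "\<exists>q\<in>lower_consts F x. val F x - d < of_rat q"
proof (cases "val F x - d < 0")
  case True
  then show ?thesis
    using zero_in_lower[OF x] by force
next
  case False
  obtain q where q: "val F x - d < of_rat q" "of_rat q < val F x"
    using of_rat_dense[of "val F x - d" "val F x"] d by auto
  then have "0 \<le> q"
    using False by (metis diff_ge_0_iff_ge less_eq_real_def not_le of_rat_0 of_rat_less order.strict_trans2)
  then show ?thesis
    using lower_if_less_val[OF x _ q(2)] q(1) by blast
qed

lemma exists_upper_below: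
  assumes x: "x \<in> A" and t: "val F x < t" "t \<le> 1"
  shows "\<exists>s. val F x < of_rat s \<and> of_rat s < t \<and> 0 \<le> s \<and> s \<le> 1 \<and> n x \<oplus> c s \<in> F"
proof -
  obtain s where s: "val F x < of_rat s" "of_rat s < t"
    using of_rat_dense t by blast
  then have "(of_rat s :: real) < 1" "0 < (of_rat s :: real)"
    using t val_nonneg[OF x] by linarith+
  then have "s \<le> 1" "0 \<le> s"
    by simp_all
  then show ?thesis
    using s upper_if_val_less[OF x] by blast
qed

lemma val_oplus_ge:
  assumes x: "x \<in> A" and y: "y \<in> A"
  shows "min (val F x + val F y) 1 \<le> val F (x \<oplus> y)"
proof (rule ccontr)
  assume "\<not> ?thesis"
  then obtain q where q: "val F (x \<oplus> y) < of_rat q" "of_rat q < min (val F x + val F y) 1"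
    using of_rat_dense by (meson not_le)
  define d where "d = (val F x + val F y - of_rat q) / 2"
  have "0 < d"
    using q by (simp add: d_def)
  then obtain q1 q2 where q1: "q1 \<in> lower_consts F x" "val F x - d < of_rat q1"
    and q2: "q2 \<in> lower_consts F y" "val F y - d < of_rat q2"
    using exists_lower_above x y by meson
  then have q12: "0 \<le> q1" "q1 \<le> 1" "0 \<le> q2" "q2 \<le> 1"
    by (auto simp: lower_consts_def)
  have "(n (c q1) \<oplus> x) \<otimes> (n (c q2) \<oplus> y) \<in> F"
    using F_otimes q1 q2 by (simp add: lower_consts_def)
  then have "n (c q1 \<oplus> c q2) \<oplus> (x \<oplus> y) \<in> F"
    using F_up imp_otimes_imp_le_oplus[of "c q1" x "c q2" y] q12 x y by simp
  then have "min (q1 + q2) 1 \<in> lower_consts F (x \<oplus> y)"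
    using q12 by (simp add: const_oplus lower_consts_def)
  then have "of_rat (min (q1 + q2) 1) \<le> val F (x \<oplus> y)"
    by (rule val_ge_lower)
  moreover have "of_rat q < val F x + val F y"
    using q(2) by simp
  then have "of_rat q < (of_rat (q1 + q2) :: real)"
    using q1(2) q2(2) unfolding d_def of_rat_add by argo
  ultimately show False
    using q by (simp add: min_def split: if_splits)
qed

lemma val_oplus_le:
  assumes x: "x \<in> A" and y: "y \<in> A"
  shows "val F (x \<oplus> y) \<le> min (val F x + val F y) 1"
proof (rule ccontr)
  assume "\<not> ?thesis"
  moreover have "val F (x \<oplus> y) \<le> 1"
    using val_le_1 x y by simp
  ultimately have lt: "val F x + val F y < val F (x \<oplus> y)"
    by linarith
  define d where "d = (val F (x \<oplus> y) - val F x - val F y) / 3"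
  have "0 < d" "val F x + d \<le> 1" "val F y + d \<le> 1"
    using lt val_nonneg[OF x] val_nonneg[OF y] \<open>val F (x \<oplus> y) \<le> 1\<close>
    by (simp_all add: d_def field_simps)
  then obtain s1 s2
    where s1: "of_rat s1 < val F x + d" "0 \<le> s1" "s1 \<le> 1" "n x \<oplus> c s1 \<in> F"
      and s2: "of_rat s2 < val F y + d" "0 \<le> s2" "s2 \<le> 1" "n y \<oplus> c s2 \<in> F"
    using exists_upper_below[OF x, of "val F x + d"] exists_upper_below[OF y, of "val F y + d"]
    by auto
  have s12: "(of_rat (s1 + s2) :: real) < val F (x \<oplus> y)"
    using s1(1) s2(1) lt unfolding d_def of_rat_add by argo
  then have "s1 + s2 \<le> 1"
    using \<open>val F (x \<oplus> y) \<le> 1\<close> by (metis of_rat_less_eq less_le_not_le order.trans of_rat_1)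
  have "(n x \<oplus> c s1) \<otimes> (n y \<oplus> c s2) \<in> F"
    using F_otimes s1 s2 by simp
  then have "n (x \<oplus> y) \<oplus> (c s1 \<oplus> c s2) \<in> F"
    using F_up imp_otimes_imp_le_oplus[of x "c s1" y "c s2"] s1 s2 x y by simp
  then have "val F (x \<oplus> y) \<le> of_rat (s1 + s2)"
    using val_le_upper[of "x \<oplus> y" "s1 + s2"] x y s1 s2 \<open>s1 + s2 \<le> 1\<close> by (simp add: const_oplus)
  then show False
    using s12 by simp
qed

lemma val_oplus: "x \<in> A \<Longrightarrow> y \<in> A \<Longrightarrow> val F (x \<oplus> y) = min (val F x + val F y) 1"
  by (intro antisym val_oplus_le val_oplus_ge)

lemma val_zero: "val F z = 0"
  using val_le_upper[of z 0] val_nonneg[of z] one_in_F by simp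

lemma val_hom: "hom (val F)"
  unfolding mv_hom_unit_def using val_nonneg val_le_1 val_zero val_oplus val_neg by auto

lemma val_eq_1_iff: assumes y: "y \<in> A" shows "val F y = 1 \<longleftrightarrow> y \<in> F"
proof -
  have in_F: "val F w = 1" if "w \<in> A" "w \<in> F" for w
  proof -
    have "1 \<in> lower_consts F w"
      using that by (simp add: lower_consts_def)
    then show ?thesis
      using val_ge_lower val_le_1[OF \<open>w \<in> A\<close>] by force
  qed
  moreover have "y \<in> F" if val_y: "val F y = 1"
  proof (rule ccontr)
    assume "y \<notin> F"
    then obtain m where "n (otimes_pow m y) \<in> F"
      using maximal_filter_neg_pow[OF maximal y] by blast
    then have "val F (n (otimes_pow m y)) = 1"
      using in_F y by simp
    then show False
      using hom_otimes_pow[OF val_hom y val_y, of m] val_neg y by simp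
  qed
  ultimately show ?thesis
    using y by blast
qed

end

context pavelka_alg
begin

lemma val_hom: assumes "F \<in> SP" shows "hom (val F)"
proof -
  interpret maximal_filter A p n z c F
    using assms by unfold_locales
  show ?thesis
    by (rule val_hom)
qed

lemma val_eq_1_iff: assumes "F \<in> SP" "y \<in> A" shows "val F y = 1 \<longleftrightarrow> y \<in> F"
proof -
  interpret maximal_filter A p n z c F
    using assms by unfold_locales
  show ?thesis
    using assms(2) by (rule val_eq_1_iff)
qed

lemma val_const: "F \<in> SP \<Longrightarrow> 0 \<le> q \<Longrightarrow> q \<le> 1 \<Longrightarrow> val F (c q) = of_rat q"
  using hom_const val_hom by blast

lemma quot_val_eq_val:
  assumes F: "F \<in> SP" and x: "x \<in> A"
  shows "quot_val A p n z F x = val F x"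
  unfolding quot_val_def
proof (rule the_equality)
  show "\<exists>h. hom h \<and> {y \<in> A. h y = 1} = F \<and> h x = val F x"
    using val_hom[OF F] val_eq_1_iff[OF F] filterD(1)[OF spec_MD(1)[OF F]] by blast
next
  fix r assume "\<exists>h. hom h \<and> {y \<in> A. h y = 1} = F \<and> h x = r"
  then obtain h where "hom h" "{y \<in> A. h y = 1} = F" "h x = r"
    by blast
  then show "r = val F x"
    using hom_eq_if_same_kernel[OF _ val_hom[OF F] _ x] val_eq_1_iff[OF F] by blast
qed

end

locale semisimple_pavelka = pavelka_alg +
  assumes semisimple: "mv_semisimple A p n z"
begin

lemma le_iff_val_le:
  assumes x: "x \<in> A" and y: "y \<in> A"
  shows "x \<preceq> y \<longleftrightarrow> (\<forall>F\<in>SP. val F x \<le> val F y)"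
proof
  assume "x \<preceq> y"
  then show "\<forall>F\<in>SP. val F x \<le> val F y"
    using hom_mono val_hom x y by blast
next
  assume le: "\<forall>F\<in>SP. val F x \<le> val F y"
  have "n x \<oplus> y \<in> F" if F: "F \<in> SP" for F
    using le F x y val_eq_1_iff[OF F, of "n x \<oplus> y"] hom_imp[OF val_hom[OF F] x y] by simp
  then have "n x \<oplus> y \<in> A \<inter> \<Inter> SP"
    using x y by auto
  then show "x \<preceq> y"
    using semisimple unfolding mv_semisimple_def mv_le_def by blast
qed

end

section \<open>Monadic Pavelka algebras\<close>

locale monadic_pavelka_alg = semisimple_pavelka +
  fixes e :: "'a \<Rightarrow> 'a"
  assumes monadic: "monadic_pavelka A p n c e"
begin

lemma e_closed[simp]: "x \<in> A \<Longrightarrow> e x \<in> A"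
  and e_mono: "x \<preceq> y \<Longrightarrow> x \<in> A \<Longrightarrow> y \<in> A \<Longrightarrow> e x \<preceq> e y"
  and e_ge: "x \<in> A \<Longrightarrow> x \<preceq> e x"
  and e_idem[simp]: "x \<in> A \<Longrightarrow> e (e x) = e x"
  and e_neg_e[simp]: "x \<in> A \<Longrightarrow> e (n (e x)) = n (e x)"
  and const_otimes_e: "0 \<le> r \<Longrightarrow> r \<le> 1 \<Longrightarrow> x \<in> A \<Longrightarrow> c r \<otimes> e x = e (c r \<otimes> x)"
  using monadic unfolding monadic_pavelka_def by auto

abbreviation u where "u x \<equiv> univ_q n e x"

definition e_fixed :: "'a set" where
  "e_fixed = {x \<in> A. e x = x}"

lemma e_fixed_closed: "b \<in> e_fixed \<Longrightarrow> b \<in> A"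
  and e_fixedD: "b \<in> e_fixed \<Longrightarrow> e b = b"
  by (simp_all add: e_fixed_def)

lemma e_in_fixed: "x \<in> A \<Longrightarrow> e x \<in> e_fixed"
  by (simp add: e_fixed_def)

lemma e_fixedI: "x \<in> A \<Longrightarrow> e x \<preceq> x \<Longrightarrow> x \<in> e_fixed"
  unfolding e_fixed_def using mv_le_antisym e_ge by auto

lemma fixed_neg: "b \<in> e_fixed \<Longrightarrow> n b \<in> e_fixed"
  using e_neg_e[of b] by (simp add: e_fixed_def)

lemma e_least: "x \<preceq> b \<Longrightarrow> x \<in> A \<Longrightarrow> b \<in> e_fixed \<Longrightarrow> e x \<preceq> b"
  using e_mono[of x b] by (simp add: e_fixed_def)

lemma u_closed[simp]: "x \<in> A \<Longrightarrow> u x \<in> A"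
  by (simp add: univ_q_def)

lemma u_le: "x \<in> A \<Longrightarrow> u x \<preceq> x"
  unfolding univ_q_def using e_ge[of "n x"] neg_le_neg_iff[of "n (e (n x))" x] by simp

lemma u_in_fixed: "x \<in> A \<Longrightarrow> u x \<in> e_fixed"
  by (simp add: e_fixed_def univ_q_def)

lemma fixed_u: "b \<in> e_fixed \<Longrightarrow> u b = b"
  using e_fixedD[OF fixed_neg] e_fixed_closed by (simp add: univ_q_def)

lemma u_greatest:
  assumes "b \<preceq> x" "x \<in> A" "b \<in> e_fixed"
  shows "b \<preceq> u x"
proof -
  have "b \<in> A" "e (n b) = n b"
    using assms(3) fixed_neg e_fixed_closed e_fixedD by auto
  then have "e (n x) \<preceq> n b"
    using assms e_mono[of "n x" "n b"] by simp
  then show ?thesis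
    using \<open>b \<in> A\<close> assms(2) neg_le_neg_iff[of b "n (e (n x))"] by (simp add: univ_q_def)
qed

lemma fixed_const_otimes: "b \<in> e_fixed \<Longrightarrow> 0 \<le> r \<Longrightarrow> r \<le> 1 \<Longrightarrow> c r \<otimes> b \<in> e_fixed"
  using const_otimes_e[of r b] by (simp add: e_fixed_def)

lemma one_fixed: "n z \<in> e_fixed"
  using e_fixedI[of "n z"] by simp

lemma const_fixed: "0 \<le> r \<Longrightarrow> r \<le> 1 \<Longrightarrow> c r \<in> e_fixed"
  using fixed_const_otimes[OF one_fixed] by simp

lemma fixed_const_oplus:
  assumes b: "b \<in> e_fixed" and r: "0 \<le> r" "r \<le> 1"
  shows "c r \<oplus> b \<in> e_fixed"
proof -
  have "n (c (1 - r) \<otimes> n b) \<in> e_fixed"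
    using fixed_neg fixed_const_otimes b r by simp
  moreover have "n (c (1 - r) \<otimes> n b) = c r \<oplus> b"
    using b r e_fixed_closed const_neg[of "1 - r"] by simp
  ultimately show ?thesis
    by simp
qed

lemma fixed_inf:
  assumes b1: "b1 \<in> e_fixed" and b2: "b2 \<in> e_fixed"
  shows "b1 \<sqinter> b2 \<in> e_fixed"
proof -
  have A: "b1 \<in> A" "b2 \<in> A"
    using b1 b2 e_fixed_closed by auto
  then have "e (b1 \<sqinter> b2) \<preceq> b1" "e (b1 \<sqinter> b2) \<preceq> b2"
    using e_least b1 b2 by simp_all
  then show ?thesis
    using A inf_greatest e_fixedI by simp
qed

lemma fixed_sup:
  assumes "b1 \<in> e_fixed" "b2 \<in> e_fixed"
  shows "b1 \<squnion> b2 \<in> e_fixed"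
proof -
  have "n (n b1 \<sqinter> n b2) \<in> e_fixed"
    using assms fixed_neg fixed_inf by simp
  then show ?thesis
    using assms e_fixed_closed by simp
qed

lemma e_sup: assumes x: "x \<in> A" and y: "y \<in> A" shows "e (x \<squnion> y) = e x \<squnion> e y"
proof (rule mv_le_antisym)
  have "x \<preceq> e x \<squnion> e y" "y \<preceq> e x \<squnion> e y"
    using x y e_ge[of x] e_ge[of y] mv_le_trans[of x "e x" "e x \<squnion> e y"]
      mv_le_trans[of y "e y" "e x \<squnion> e y"] by simp_all
  then have "x \<squnion> y \<preceq> e x \<squnion> e y"
    using x y sup_least by simp
  then show "e (x \<squnion> y) \<preceq> e x \<squnion> e y"
    using e_least fixed_sup e_in_fixed x y by simp
  show "e x \<squnion> e y \<preceq> e (x \<squnion> y)"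
    using x y sup_least e_mono by simp
qed (use x y in simp_all)

section \<open>The relation R\<close>

definition agree_on_fixed :: "'a set \<Rightarrow> 'a set \<Rightarrow> bool" where
  "agree_on_fixed G F \<longleftrightarrow> (\<forall>b\<in>e_fixed. val G b = val F b)"

abbreviation R where "R G F \<equiv> rel_R A p n z e G F"

lemma carrier_not_empty: "A \<noteq> {}"
  using zero_closed by blast

lemma val_nonneg: "F \<in> SP \<Longrightarrow> x \<in> A \<Longrightarrow> 0 \<le> val F x"
  and val_le_1: "F \<in> SP \<Longrightarrow> x \<in> A \<Longrightarrow> val F x \<le> 1"
  using hom_nonneg hom_le_1 val_hom by blast+

lemma rel_R_eq:
  assumes G: "G \<in> SP" and F: "F \<in> SP"
  shows "R G F = (INF a\<in>A. min 1 (1 - val F (u a) + val G a))"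
  unfolding rel_R_def by (intro INF_cong) (simp_all add: quot_val_eq_val G F)

lemma rel_R_bdd:
  assumes G: "G \<in> SP" and F: "F \<in> SP"
  shows "bdd_below ((\<lambda>a. min 1 (1 - val F (u a) + val G a)) ` A)"
proof (rule bdd_belowI)
  fix t assume "t \<in> (\<lambda>a. min 1 (1 - val F (u a) + val G a)) ` A"
  then show "0 \<le> t"
    using val_le_1[OF F] val_nonneg[OF G] by force
qed

lemma rel_R_le:
  assumes G: "G \<in> SP" and F: "F \<in> SP" and a: "a \<in> A"
  shows "R G F \<le> min 1 (1 - val F (u a) + val G a)"
  unfolding rel_R_eq[OF G F] by (rule cINF_lower[OF rel_R_bdd[OF G F] a])

lemma rel_R_nonneg:
  assumes G: "G \<in> SP" and F: "F \<in> SP"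
  shows "0 \<le> R G F"
  unfolding rel_R_eq[OF G F]
  using val_le_1[OF F] val_nonneg[OF G] carrier_not_empty by (intro cINF_greatest) auto

lemma rel_R_less:
  assumes G: "G \<in> SP" and F: "F \<in> SP" and r: "R G F < r" "r \<le> 1"
  shows "\<exists>b\<in>e_fixed. 1 - val F b + val G b < r"
proof -
  obtain a where a: "a \<in> A" "min 1 (1 - val F (u a) + val G a) < r"
    using r rel_R_eq[OF G F] cINF_less_iff[OF carrier_not_empty rel_R_bdd[OF G F]] by auto
  moreover have "val G (u a) \<le> val G a"
    using hom_mono[OF val_hom[OF G] u_le] a by simp
  ultimately show ?thesis
    using r u_in_fixed by (intro bexI[of _ "u a"]) (auto simp: min_def split: if_splits)
qed

lemma rel_R_eq_1_iff:
  assumes G: "G \<in> SP" and F: "F \<in> SP"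
  shows "R G F = 1 \<longleftrightarrow> agree_on_fixed G F"
proof
  assume R: "R G F = 1"
  have "val F b \<le> val G b" if b: "b \<in> e_fixed" for b
    using rel_R_le[OF G F e_fixed_closed[OF b]] R fixed_u[OF b] by simp
  moreover have "val G b = val F b" if b: "b \<in> e_fixed"
    and "val F b \<le> val G b" "val F (n b) \<le> val G (n b)" for b
    using that hom_neg[OF val_hom[OF G]] hom_neg[OF val_hom[OF F]] e_fixed_closed[OF b] by simp
  ultimately show "agree_on_fixed G F"
    unfolding agree_on_fixed_def using fixed_neg by blast
next
  assume agree: "agree_on_fixed G F"
  have "min 1 (1 - val F (u a) + val G a) = 1" if a: "a \<in> A" for a
  proof -
    have "val F (u a) = val G (u a)"
      using agree u_in_fixed[OF a] by (simp add: agree_on_fixed_def)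
    also have "\<dots> \<le> val G a"
      using hom_mono[OF val_hom[OF G] u_le] a by simp
    finally show ?thesis
      by simp
  qed
  then have "R G F = (INF a\<in>A. 1)"
    unfolding rel_R_eq[OF G F] by (rule INF_cong[OF refl])
  then show "R G F = 1"
    using carrier_not_empty by simp
qed

abbreviation crisp where
  "crisp \<equiv> \<forall>G\<in>SP. \<forall>F\<in>SP. R G F \<in> {0, 1}"

abbreviation fixed_add_closed where
  "fixed_add_closed \<equiv> \<forall>b1\<in>e_fixed. \<forall>b2\<in>e_fixed. b1 \<oplus> b2 \<in> e_fixed"

lemma fixed_otimes:
  assumes "fixed_add_closed" "b1 \<in> e_fixed" "b2 \<in> e_fixed"
  shows "b1 \<otimes> b2 \<in> e_fixed"
  using assms fixed_neg[of "n b1 \<oplus> n b2"] by (simp add: mv_mult_def fixed_neg)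

lemma univ_otimes_le_iff_fixed_add_closed:
  "(\<forall>x\<in>A. \<forall>y\<in>A. u x \<otimes> u y \<preceq> u (x \<otimes> y)) \<longleftrightarrow> fixed_add_closed"
proof
  assume iii: "\<forall>x\<in>A. \<forall>y\<in>A. u x \<otimes> u y \<preceq> u (x \<otimes> y)"
  have "b1 \<otimes> b2 \<in> e_fixed" if "b1 \<in> e_fixed" "b2 \<in> e_fixed" for b1 b2
  proof -
    have A: "b1 \<in> A" "b2 \<in> A"
      using that e_fixed_closed by auto
    then have "b1 \<otimes> b2 \<preceq> u (b1 \<otimes> b2)"
      using iii that fixed_u by force
    then have "u (b1 \<otimes> b2) = b1 \<otimes> b2"
      using A u_le mv_le_antisym by simp
    then show ?thesis
      using A u_in_fixed by (metis otimes_closed)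
  qed
  then show fixed_add_closed
    using fixed_neg e_fixed_closed by (metis neg_neg neg_otimes)
next
  assume add: fixed_add_closed
  show "\<forall>x\<in>A. \<forall>y\<in>A. u x \<otimes> u y \<preceq> u (x \<otimes> y)"
  proof (intro ballI)
    fix x y assume "x \<in> A" "y \<in> A"
    then have "u x \<otimes> u y \<preceq> x \<otimes> y" "u x \<otimes> u y \<in> e_fixed"
      using otimes_mono2 u_le fixed_otimes[OF add] u_in_fixed by simp_all
    then show "u x \<otimes> u y \<preceq> u (x \<otimes> y)"
      using u_greatest \<open>x \<in> A\<close> \<open>y \<in> A\<close> by simp
  qed
qed

lemma exists_fixed_val_less:
  assumes G: "G \<in> SP" and F: "F \<in> SP" and "\<not> agree_on_fixed G F"
  shows "\<exists>b\<in>e_fixed. val G b < val F b"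
proof -
  obtain b where b: "b \<in> e_fixed" "val G b \<noteq> val F b"
    using assms(3) unfolding agree_on_fixed_def by blast
  show ?thesis
  proof (cases "val G b < val F b")
    case False
    then have "val G (n b) < val F (n b)"
      using b hom_neg[OF val_hom[OF G]] hom_neg[OF val_hom[OF F]] e_fixed_closed by simp
    then show ?thesis
      using fixed_neg[OF b(1)] by blast
  qed (use b in blast)
qed

text \<open>A suitable truncated multiple of \<open>c (1 - q) \<otimes> b\<close>, with \<open>b/G < q < b/F\<close>, separates
  \<open>G\<close> from \<open>F\<close> completely.\<close>

lemma fixed_add_closed_separates:
  assumes add: fixed_add_closed and G: "G \<in> SP" and F: "F \<in> SP" and "\<not> agree_on_fixed G F"
  shows "\<exists>d\<in>e_fixed. val G d = 0 \<and> val F d = 1"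
proof -
  obtain b where b: "b \<in> e_fixed" "b \<in> A" "val G b < val F b"
    using exists_fixed_val_less[OF assms(2-4)] e_fixed_closed by blast
  obtain q where q: "val G b < of_rat q" "of_rat q < val F b"
    using of_rat_dense b by blast
  then have "(0::real) < of_rat q" "(of_rat q :: real) < 1"
    using val_nonneg[OF G b(2)] val_le_1[OF F b(2)] by linarith+
  then have q01: "0 \<le> q" "q \<le> 1"
    by simp_all
  obtain m :: nat where "1 / (val F b - of_rat q) < of_nat m"
    using reals_Archimedean2 by blast
  then have m: "1 \<le> of_nat m * (val F b - of_rat q)"
    using q by (simp add: field_simps)
  define d where "d = oplus_pow m (c (1 - q) \<otimes> b)"
  have t_fixed: "c (1 - q) \<otimes> b \<in> e_fixed"
    using fixed_const_otimes b q01 by simp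
  have "d \<in> e_fixed"
    unfolding d_def
    by (induct m) (use add t_fixed const_fixed[of 0] in simp_all)
  have "val H d = min 1 (of_nat m * max 0 (val H b - of_rat q))" if H: "H \<in> SP" for H
    using hom_oplus_pow[OF val_hom[OF H]] hom_otimes[OF val_hom[OF H]] val_const[OF H] b(2) q01
    by (simp add: d_def of_rat_diff)
  then have "val G d = 0" "val F d = 1"
    using q m G F by (simp_all add: max_def min_def)
  with \<open>d \<in> e_fixed\<close> show ?thesis
    by blast
qed

lemma crisp_if_fixed_add_closed:
  assumes add: fixed_add_closed
  shows crisp
proof (intro ballI)
  fix G F assume G: "G \<in> SP" and F: "F \<in> SP"
  show "R G F \<in> {0, 1}"
  proof (cases "agree_on_fixed G F")
    case True
    then show ?thesis
      using rel_R_eq_1_iff[OF G F] by simp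
  next
    case False
    then obtain d where d: "d \<in> e_fixed" "val G d = 0" "val F d = 1"
      using fixed_add_closed_separates[OF add G F] by blast
    then have "R G F \<le> 0"
      using rel_R_le[OF G F e_fixed_closed[OF d(1)]] fixed_u[OF d(1)] by simp
    then show ?thesis
      using rel_R_nonneg[OF G F] by simp
  qed
qed

text \<open>Consider the filter generated by \<open>P\<close> and the elements \<open>n (c \<epsilon>) \<oplus> b\<close> with \<open>b\<close> fixed and
  \<open>b/F > 1 - \<epsilon>\<close>.  A maximal filter \<open>G\<close> containing it would have \<open>R G F = 0\<close>, which yields
  such a \<open>b\<close> with \<open>b/G < \<epsilon>\<close>, contradicting \<open>n (c \<epsilon>) \<oplus> b \<in> G\<close>.  So the filter is improper,
  and a nilpotent generator \<open>P \<otimes> (n (c \<epsilon>) \<oplus> b)\<close> provides the required \<open>b\<close>.\<close>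

lemma crisp_separation:
  assumes crisp and F: "F \<in> SP" and P: "P \<in> A" and \<epsilon>: "0 < \<epsilon>" "\<epsilon> \<le> 1"
    and disagree: "\<And>G. G \<in> SP \<Longrightarrow> P \<in> G \<Longrightarrow> \<not> agree_on_fixed G F"
  shows "\<exists>b\<in>e_fixed. 1 - of_rat \<epsilon> < val F b \<and> (\<forall>G\<in>SP. P \<in> G \<longrightarrow> val G b < of_rat \<epsilon>)"
proof -
  define Q where "Q b = n (c \<epsilon>) \<oplus> b" for b
  have Q_closed: "b \<in> A \<Longrightarrow> Q b \<in> A" for b
    using \<epsilon> by (simp add: Q_def)
  have val_Q: "val H (Q b) = min (1 - of_rat \<epsilon> + val H b) 1" if "H \<in> SP" "b \<in> A" for H b
    using hom_imp[OF val_hom[OF that(1)] _ that(2), of "c \<epsilon>"] val_const[OF that(1)] \<epsilon>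
    by (simp add: Q_def)
  define T where "T = {b \<in> e_fixed. 1 - of_rat \<epsilon> < val F b}"
  let ?S = "(\<lambda>b. P \<otimes> Q b) ` T"
  have TA: "T \<subseteq> A"
    using e_fixed_closed by (auto simp: T_def)
  have SA: "?S \<subseteq> A"
    using P Q_closed TA by auto
  have "P \<otimes> Q (n z) = P"
    using P \<epsilon> by (simp add: Q_def)
  then have "P \<in> ?S"
    using one_fixed hom_one[OF val_hom[OF F]] \<epsilon> unfolding T_def by force
  have "b1 \<sqinter> b2 \<in> T" if b: "b1 \<in> T" "b2 \<in> T" for b1 b2
  proof -
    have "b1 \<in> A" "b2 \<in> A"
      using b TA by auto
    then show ?thesis
      using b fixed_inf hom_inf[OF val_hom[OF F], of b1 b2] by (simp add: T_def)
  qed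
  moreover have "P \<otimes> Q x \<preceq> P \<otimes> Q y" if "x \<preceq> y" "x \<in> A" "y \<in> A" for x y
    using that P Q_closed oplus_mono[of x y "n (c \<epsilon>)"] otimes_mono2[of P P] \<epsilon>
    by (simp add: Q_def oplus_comm[of _ "n (c \<epsilon>)"])
  ultimately have directed: "\<exists>s\<in>?S. s \<preceq> s1 \<and> s \<preceq> s2" if "s1 \<in> ?S" "s2 \<in> ?S" for s1 s2
    using mono_image_directed[OF TA, of "\<lambda>b. P \<otimes> Q b"] that by blast
  then consider (maximal) G where "G \<in> SP" "?S \<subseteq> G" | (nilpotent) b m where "b \<in> T" "otimes_pow m (P \<otimes> Q b) = z"
    using directed_maximal_or_nilpotent[OF SA] \<open>P \<in> ?S\<close> by blast
  then show ?thesis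
  proof cases
    case maximal
    then have "R G F \<noteq> 1"
      using \<open>P \<in> ?S\<close> disagree rel_R_eq_1_iff F by blast
    then have "R G F = 0"
      using \<open>crisp\<close> maximal F by blast
    then have "R G F < of_rat \<epsilon>"
      using \<epsilon> by simp
    then obtain b where b: "b \<in> e_fixed" "1 - val F b + val G b < of_rat \<epsilon>"
      using rel_R_less[OF maximal(1) F \<open>R G F < of_rat \<epsilon>\<close>] \<epsilon> by (auto simp: of_rat_less_eq)
    then have b_A: "b \<in> A" and "b \<in> T"
      using e_fixed_closed val_nonneg[OF maximal(1)] unfolding T_def by force+
    then have "P \<otimes> Q b \<in> G"
      using maximal by blast
    moreover have "P \<otimes> Q b \<preceq> Q b"
      using P Q_closed[OF b_A] otimes_le[of "Q b" P] by (simp add: otimes_comm[of P])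
    ultimately have "Q b \<in> G"
      using filterD(4)[OF spec_MD(1)[OF maximal(1)]] Q_closed b_A by blast
    then have "val G (Q b) = 1"
      using val_eq_1_iff[OF maximal(1)] Q_closed b_A by blast
    then have "of_rat \<epsilon> \<le> val G b"
      using val_Q[OF maximal(1) b_A] by (simp add: min_def split: if_splits)
    then show ?thesis
      using b val_le_1[OF F b_A] by linarith
  next
    case nilpotent
    then have b: "b \<in> e_fixed" "b \<in> A" "1 - of_rat \<epsilon> < val F b"
      using e_fixed_closed unfolding T_def by auto
    have "val G b < of_rat \<epsilon>" if G: "G \<in> SP" "P \<in> G" for G
    proof (rule ccontr)
      assume "\<not> ?thesis"
      then have "val G (Q b) = 1"
        using val_Q[OF G(1) b(2)] by simp
      moreover have "val G P = 1"
        using G val_eq_1_iff[OF G(1) P] by simp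
      ultimately have "val G (P \<otimes> Q b) = 1"
        using hom_otimes[OF val_hom[OF G(1)] P Q_closed[OF b(2)]] by simp
      then show False
        using hom_otimes_pow[OF val_hom[OF G(1)], of "P \<otimes> Q b" m] hom_zero[OF val_hom[OF G(1)]]
          nilpotent(2) P Q_closed[OF b(2)] by simp
    qed
    then show ?thesis
      using b by blast
  qed
qed

text \<open>Otherwise the separation lemma yields \<open>b\<close>, and \<open>c s \<oplus> (c (1 - s/2) \<otimes> n b)\<close> is an
  \<open>e\<close>-fixed upper bound of \<open>a\<close> with value \<open>s\<close> at \<open>F\<close>.\<close>

lemma crisp_agreeing_filter_above:
  assumes crisp and F: "F \<in> SP" and a: "a \<in> A" and s: "0 < s" "of_rat s < val F (e a)"
  shows "\<exists>G\<in>SP. agree_on_fixed G F \<and> of_rat s \<le> val G a"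
proof (rule ccontr)
  assume no_witness: "\<not> ?thesis"
  have "(of_rat s :: real) < 1"
    using s val_le_1[OF F e_closed[OF a]] by linarith
  then have s01: "0 < s" "s < 1"
    using s by simp_all
  define P where "P = n (c s) \<oplus> a"
  have P_A: "P \<in> A"
    using s01 a by (simp add: P_def)
  have P_iff: "P \<in> H \<longleftrightarrow> of_rat s \<le> val H a" if "H \<in> SP" for H
    using hom_ge_const_iff[OF val_hom[OF that] a, of s] val_eq_1_iff[OF that P_A] s01
    by (simp add: P_def)
  define \<epsilon> where "\<epsilon> = s / 2"
  have \<epsilon>: "0 < \<epsilon>" "\<epsilon> \<le> 1"
    using s01 by (simp_all add: \<epsilon>_def)
  have "\<not> agree_on_fixed G F" if G: "G \<in> SP" "P \<in> G" for G
    using no_witness G P_iff by blast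
  then obtain b where b: "b \<in> e_fixed" "1 - of_rat \<epsilon> < val F b"
    and small: "\<And>G. G \<in> SP \<Longrightarrow> P \<in> G \<Longrightarrow> val G b < of_rat \<epsilon>"
    using crisp_separation[OF \<open>crisp\<close> F P_A \<epsilon>] by blast
  have b_A: "b \<in> A"
    using b e_fixed_closed by blast
  define d where "d = c s \<oplus> (c (1 - \<epsilon>) \<otimes> n b)"
  have "d \<in> e_fixed"
    unfolding d_def using b s01 \<epsilon> by (simp add: fixed_const_oplus fixed_const_otimes fixed_neg)
  have val_d: "val H d = min (of_rat s + max 0 (1 - of_rat \<epsilon> - val H b)) 1" if "H \<in> SP" for H
    using hom_oplus[OF val_hom[OF that]] hom_otimes[OF val_hom[OF that]] hom_neg[OF val_hom[OF that]]
      val_const[OF that] b_A s01 \<epsilon> by (simp add: d_def of_rat_diff)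
  have "a \<preceq> d"
  proof (subst le_iff_val_le[OF a e_fixed_closed[OF \<open>d \<in> e_fixed\<close>]], intro ballI)
    fix H assume H: "H \<in> SP"
    show "val H a \<le> val H d"
    proof (cases "of_rat s \<le> val H a")
      case True
      then have "val H b < of_rat \<epsilon>"
        using small H P_iff by blast
      then have "val H d = 1"
        using val_d[OF H] by (simp add: \<epsilon>_def of_rat_divide)
      then show ?thesis
        using val_le_1[OF H a] by simp
    next
      case False
      have "(of_rat s :: real) \<le> 1"
        using s01 by simp
      then have "of_rat s \<le> val H d"
        unfolding val_d[OF H] by simp
      with False show ?thesis
        by simp
    qed
  qed
  then have "val F (e a) \<le> val F d"
    using e_least[OF _ a \<open>d \<in> e_fixed\<close>] hom_mono[OF val_hom[OF F]] a e_fixed_closed[OF \<open>d \<in> e_fixed\<close>]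
    by simp
  also have "val F d = of_rat s"
    using val_d[OF F] b s01 by (simp add: min_def)
  finally show False
    using s(2) by simp
qed

lemma crisp_val_e_approx:
  assumes crisp and F: "F \<in> SP" and a: "a \<in> A" and t: "t < val F (e a)"
  shows "\<exists>G\<in>SP. agree_on_fixed G F \<and> t < val G a"
proof (cases "t < 0")
  case True
  then show ?thesis
    using F val_nonneg[OF F a] by (auto simp: agree_on_fixed_def)
next
  case False
  obtain s where s: "t < of_rat s" "of_rat s < val F (e a)"
    using of_rat_dense t by blast
  then have "(0::real) < of_rat s"
    using False by linarith
  then obtain G where "G \<in> SP" "agree_on_fixed G F" "of_rat s \<le> val G a"
    using crisp_agreeing_filter_above[OF \<open>crisp\<close> F a _ s(2)] by auto
  with s(1) show ?thesis
    by (meson less_le_trans)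
qed

lemma crisp_e_oplus_le:
  assumes crisp and x: "x \<in> A" and y: "y \<in> A"
  shows "e (x \<oplus> y) \<preceq> e x \<oplus> e y"
  unfolding le_iff_val_le[OF e_closed[OF oplus_closed[OF x y]] oplus_closed[OF e_closed[OF x] e_closed[OF y]]]
proof (intro ballI)
  fix F assume F: "F \<in> SP"
  show "val F (e (x \<oplus> y)) \<le> val F (e x \<oplus> e y)"
  proof (rule ccontr)
    assume "\<not> ?thesis"
    then obtain G where G: "G \<in> SP" "agree_on_fixed G F" "val F (e x \<oplus> e y) < val G (x \<oplus> y)"
      using crisp_val_e_approx[OF \<open>crisp\<close> F oplus_closed[OF x y]] not_le by blast
    have "val G x \<le> val G (e x)" "val G y \<le> val G (e y)"
      using hom_mono[OF val_hom[OF G(1)] e_ge] x y by simp_all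
    then have "val G (x \<oplus> y) \<le> val G (e x \<oplus> e y)"
      using hom_oplus[OF val_hom[OF G(1)]] x y by simp
    also have "\<dots> = val F (e x \<oplus> e y)"
      using G(2) e_in_fixed x y hom_oplus[OF val_hom[OF G(1)]] hom_oplus[OF val_hom[OF F]]
      by (simp add: agree_on_fixed_def)
    finally show False
      using G(3) by simp
  qed
qed

lemma fixed_add_closed_if_crisp:
  assumes crisp
  shows fixed_add_closed
proof (intro ballI)
  fix b1 b2 assume b: "b1 \<in> e_fixed" "b2 \<in> e_fixed"
  then have "b1 \<in> A" "b2 \<in> A"
    using e_fixed_closed by auto
  moreover have "e (b1 \<oplus> b2) \<preceq> b1 \<oplus> b2"
    using crisp_e_oplus_le[OF \<open>crisp\<close> \<open>b1 \<in> A\<close> \<open>b2 \<in> A\<close>] e_fixedD[OF b(1)] e_fixedD[OF b(2)]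
    by simp
  ultimately show "b1 \<oplus> b2 \<in> e_fixed"
    by (simp add: e_fixedI)
qed

text \<open>The supremum description of \<open>e x/F\<close> passes through any monotone \<open>f\<close> that is lower
  semicontinuous from the left.\<close>

lemma crisp_val_e_unary_ge:
  assumes crisp and F: "F \<in> SP" and x: "x \<in> A" and tx: "tx \<in> A"
    and f: "\<And>G. G \<in> SP \<Longrightarrow> val G tx = f (val G x)" and mono: "mono f"
    and left_cont: "\<And>w v. v < f w \<Longrightarrow> \<exists>s<w. v < f s"
  shows "f (val F (e x)) \<le> val F (e tx)"
proof (rule ccontr)
  assume "\<not> ?thesis"
  then obtain s where s: "s < val F (e x)" "val F (e tx) < f s"
    using left_cont by (meson not_le)
  then obtain G where G: "G \<in> SP" "agree_on_fixed G F" "s < val G x"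
    using crisp_val_e_approx[OF \<open>crisp\<close> F x] by blast
  have "f s \<le> val G tx"
    using f[OF G(1)] mono G(3) by (simp add: monoD)
  also have "\<dots> \<le> val G (e tx)"
    using hom_mono[OF val_hom[OF G(1)] e_ge] tx by simp
  also have "\<dots> = val F (e tx)"
    using G(2) e_in_fixed tx by (simp add: agree_on_fixed_def)
  finally show False
    using s(2) by simp
qed

lemma crisp_e_oplus_self:
  assumes crisp and x: "x \<in> A"
  shows "e (x \<oplus> x) = e x \<oplus> e x"
proof (rule mv_le_antisym)
  have "x \<oplus> x \<preceq> e x \<oplus> x" "x \<oplus> e x \<preceq> e x \<oplus> e x"
    using oplus_mono[OF e_ge[OF x] x e_closed[OF x]] x by simp_all
  then have "x \<oplus> x \<preceq> e x \<oplus> e x"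
    using x mv_le_trans[of "x \<oplus> x" "e x \<oplus> x" "e x \<oplus> e x"] by (simp add: oplus_comm[of x "e x"])
  then show "e (x \<oplus> x) \<preceq> e x \<oplus> e x"
    using e_least fixed_add_closed_if_crisp[OF \<open>crisp\<close>] e_in_fixed x by simp
  have "min (2 * val F (e x)) 1 \<le> val F (e (x \<oplus> x))" if F: "F \<in> SP" for F
  proof (rule crisp_val_e_unary_ge[OF \<open>crisp\<close> F x, where f = "\<lambda>w. min (2 * w) 1"])
    show "val G (x \<oplus> x) = min (2 * val G x) 1" if "G \<in> SP" for G
      using hom_oplus[OF val_hom[OF that] x x] by simp
    show "mono (\<lambda>w::real. min (2 * w) 1)"
      by (auto intro: monoI)
    show "\<exists>s<w. v < min (2 * s) 1" if "v < min (2 * w) 1" for w v :: real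
      using that by (intro exI[of _ "(v / 2 + w) / 2"]) auto
  qed (use x in simp)
  then show "e x \<oplus> e x \<preceq> e (x \<oplus> x)"
    using x le_iff_val_le hom_oplus[OF val_hom] by simp
qed (use x in simp_all)

lemma crisp_e_otimes_self:
  assumes crisp and x: "x \<in> A"
  shows "e (x \<otimes> x) = e x \<otimes> e x"
proof (rule mv_le_antisym)
  have "x \<otimes> x \<preceq> e x \<otimes> e x"
    using x e_ge[OF x] otimes_mono2 by simp
  then show "e (x \<otimes> x) \<preceq> e x \<otimes> e x"
    using e_least fixed_otimes[OF fixed_add_closed_if_crisp[OF \<open>crisp\<close>]] e_in_fixed x by simp
  have "max 0 (2 * val F (e x) - 1) \<le> val F (e (x \<otimes> x))" if F: "F \<in> SP" for F
  proof (rule crisp_val_e_unary_ge[OF \<open>crisp\<close> F x, where f = "\<lambda>w. max 0 (2 * w - 1)"])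
    show "val G (x \<otimes> x) = max 0 (2 * val G x - 1)" if "G \<in> SP" for G
      using hom_otimes[OF val_hom[OF that] x x] by simp
    show "mono (\<lambda>w::real. max 0 (2 * w - 1))"
      by (auto intro: monoI)
    show "\<exists>s<w. v < max 0 (2 * s - 1)" if "v < max 0 (2 * w - 1)" for w v :: real
    proof (cases "v < 0")
      case True
      then show ?thesis
        by (intro exI[of _ "w - 1"]) auto
    next
      case False
      then have "v < 2 * w - 1"
        using that by (simp add: less_max_iff_disj)
      then show ?thesis
        by (intro exI[of _ "((v + 1) / 2 + w) / 2"]) (auto simp: less_max_iff_disj field_simps)
    qed
  qed (use x in simp)
  then show "e x \<otimes> e x \<preceq> e (x \<otimes> x)"
    using x le_iff_val_le hom_otimes[OF val_hom] by simp
qed (use x in simp_all)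

lemma orig_monadic_if_crisp:
  assumes crisp
  shows "orig_monadic A p n c e"
  unfolding orig_monadic_def const_zero
proof (intro conjI ballI allI impI)
  fix x y assume x: "x \<in> A" and y: "y \<in> A"
  show "x \<preceq> e x"
    using e_ge[OF x] .
  show "e (x \<squnion> y) = e x \<squnion> e y"
    using e_sup[OF x y] .
  show "e (n (e x)) = n (e x)"
    using e_neg_e[OF x] .
  show "e (e x \<oplus> e y) = e x \<oplus> e y"
    using fixed_add_closed_if_crisp[OF assms] e_in_fixed[OF x] e_in_fixed[OF y] e_fixedD by blast
  show "e (x \<oplus> x) = e x \<oplus> e x"
    using crisp_e_oplus_self[OF assms x] .
  show "e (x \<otimes> x) = e x \<otimes> e x"
    using crisp_e_otimes_self[OF assms x] .
next
  fix r :: rat assume "0 \<le> r \<and> r \<le> 1"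
  then show "e (c r) = c r"
    using const_fixed e_fixedD by blast
qed

lemma fixed_add_closed_if_orig_monadic:
  assumes "orig_monadic A p n c e"
  shows fixed_add_closed
proof (intro ballI)
  fix b1 b2 assume b: "b1 \<in> e_fixed" "b2 \<in> e_fixed"
  then have "b1 \<in> A" "b2 \<in> A" "e b1 = b1" "e b2 = b2"
    using e_fixed_closed e_fixedD by auto
  moreover have "e (e b1 \<oplus> e b2) = e b1 \<oplus> e b2"
    using assms \<open>b1 \<in> A\<close> \<open>b2 \<in> A\<close> unfolding orig_monadic_def by blast
  ultimately show "b1 \<oplus> b2 \<in> e_fixed"
    by (simp add: e_fixed_def)
qed

end

theorem theorem16:
  fixes A :: "'a set" and p :: "'a \<Rightarrow> 'a \<Rightarrow> 'a" and n :: "'a \<Rightarrow> 'a"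
    and c :: "rat \<Rightarrow> 'a" and e :: "'a \<Rightarrow> 'a"
  assumes "monadic_pavelka A p n c e"
    and "mv_semisimple A p n (c 0)"
  shows "((\<forall>F\<in>spec_M A p n (c 0). \<forall>F'\<in>spec_M A p n (c 0).
             rel_R A p n (c 0) e F F' \<in> {0, 1})
          \<longleftrightarrow> orig_monadic A p n c e)
       \<and> (orig_monadic A p n c e
          \<longleftrightarrow> (\<forall>x\<in>A. \<forall>y\<in>A. mv_le p n (c 0) (mv_mult p n (univ_q n e x) (univ_q n e y))
                                               (univ_q n e (mv_mult p n x y))))"
proof -
  interpret monadic_pavelka_alg A p n "c 0" c e
    using assms by unfold_locales (auto simp: monadic_pavelka_def pavelka_def)
  have "crisp \<Longrightarrow> orig_monadic A p n c e"
    by (rule orig_monadic_if_crisp)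
  moreover have "orig_monadic A p n c e \<Longrightarrow> fixed_add_closed"
    by (rule fixed_add_closed_if_orig_monadic)
  moreover have "fixed_add_closed \<Longrightarrow> crisp"
    by (rule crisp_if_fixed_add_closed)
  ultimately show ?thesis
    using univ_otimes_le_iff_fixed_add_closed by blast
qed

end
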